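(* The functions $e_n(x)=\sum_{k=0}^n\binom{n}{k}\frac{(\ln x)^k}{k!}$, $n\ge0$, form an orthonormal basis of $L^2([0,1])$. Furthermore, the operator $J$ on $L^2([0,1])$ defined by $Je_n=e_n$ for $n$ even and $Je_n=-e_n$ for $n$ odd is a unitary monomial operator, and it satisfies $Jx^s=c(s)x^{\tau(s)}$ for all $s\in\mathbb{S}$, where $\tau(s)=\frac{-s}{1+2s}$ and $c(s)=\frac{1}{1+2s}$.
   Context: $\mathbb{S}=\{s\in\mathbb{C}:\operatorname{Re}s>-\tfrac12\}$. A bounded operator $T$ on $L^2([0,1])$ is a monomial operator if for every $s\in\mathbb{S}$ there exist $\tau\in\mathbb{S}$ and $c\in\mathbb{C}$ with $Tx^s=cx^\tau$. *)

theory Defs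
  imports "HOL-Analysis.Analysis"
begin

text \<open>Elements of L^2([0,1]) are represented by complex-valued functions on the reals,
  considered only on [0,1] and up to Lebesgue-a.e. equality.\<close>

definition L2 :: "(real \<Rightarrow> complex) \<Rightarrow> bool" where
  "L2 f \<longleftrightarrow> set_borel_measurable lebesgue {0..1} f
      \<and> set_integrable lebesgue {0..1} (\<lambda>x. (cmod (f x))^2)"

definition l2_inner :: "(real \<Rightarrow> complex) \<Rightarrow> (real \<Rightarrow> complex) \<Rightarrow> complex" where
  "l2_inner f g = (LINT x:{0..1}|lebesgue. cnj (f x) * g x)"

definition l2_norm :: "(real \<Rightarrow> complex) \<Rightarrow> real" where
  "l2_norm f = sqrt (LINT x:{0..1}|lebesgue. (cmod (f x))^2)"

definition l2_eq :: "(real \<Rightarrow> complex) \<Rightarrow> (real \<Rightarrow> complex) \<Rightarrow> bool" where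
  "l2_eq f g \<longleftrightarrow> (AE x in lebesgue. x \<in> {0..1} \<longrightarrow> f x = g x)"

definition l2_orthonormal_basis :: "(nat \<Rightarrow> real \<Rightarrow> complex) \<Rightarrow> bool" where
  "l2_orthonormal_basis e \<longleftrightarrow>
     (\<forall>n. L2 (e n)) \<and>
     (\<forall>m n. l2_inner (e m) (e n) = (if m = n then 1 else 0)) \<and>
     (\<forall>f. L2 f \<longrightarrow> (\<forall>\<epsilon>>0. \<exists>N a. l2_norm (\<lambda>x. f x - (\<Sum>k<N. a k * e k x)) < \<epsilon>))"

definition l2_bounded_op :: "((real \<Rightarrow> complex) \<Rightarrow> (real \<Rightarrow> complex)) \<Rightarrow> bool" where
  "l2_bounded_op T \<longleftrightarrow>
     (\<forall>f. L2 f \<longrightarrow> L2 (T f)) \<and>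
     (\<forall>f g a b. L2 f \<longrightarrow> L2 g \<longrightarrow>
         l2_eq (T (\<lambda>x. a * f x + b * g x)) (\<lambda>x. a * T f x + b * T g x)) \<and>
     (\<exists>C. \<forall>f. L2 f \<longrightarrow> l2_norm (T f) \<le> C * l2_norm f)"

definition l2_unitary :: "((real \<Rightarrow> complex) \<Rightarrow> (real \<Rightarrow> complex)) \<Rightarrow> bool" where
  "l2_unitary T \<longleftrightarrow> l2_bounded_op T \<and>
     (\<forall>f g. L2 f \<longrightarrow> L2 g \<longrightarrow> l2_inner (T f) (T g) = l2_inner f g) \<and>
     (\<forall>g. L2 g \<longrightarrow> (\<exists>f. L2 f \<and> l2_eq (T f) g))"

definition strip_S :: "complex set" where
  "strip_S = {s. Re s > - 1/2}"

definition mon :: "complex \<Rightarrow> real \<Rightarrow> complex" where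
  "mon s x = complex_of_real x powr s"

definition monomial_op :: "((real \<Rightarrow> complex) \<Rightarrow> (real \<Rightarrow> complex)) \<Rightarrow> bool" where
  "monomial_op T \<longleftrightarrow> l2_bounded_op T \<and>
     (\<forall>s\<in>strip_S. \<exists>\<tau>\<in>strip_S. \<exists>c. l2_eq (T (mon s)) (\<lambda>x. c * mon \<tau> x))"

definition e_fun :: "nat \<Rightarrow> real \<Rightarrow> complex" where
  "e_fun n x = complex_of_real (\<Sum>k\<le>n. real (n choose k) * (ln x) ^ k / fact k)"

end

theory Submission
  imports Defs
begin

(*
  Write E_{j,s}(x) = (ln x)^j x^s. Integration by parts gives
  int_0^1 E_{j,s} = (-1)^j j! / (s+1)^(j+1), so the Gram matrix of the e_n reduces to a binomial
  identity and is the identity matrix, and the n-th Fourier coefficient of x^s is s^n / (s+1)^(n+1).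

  Completeness: if f is orthogonal to every e_n, it is orthogonal to every (ln x)^k. Multiplying by
  x^(1/4) = exp((ln x)/4), whose partial sums are dominated by x^(-1/4), shows by induction that f is
  orthogonal to every x^(m/4) (ln x)^k; in particular all moments of f vanish, and f = 0 by the
  Weierstrass approximation theorem.

  An operator J with J e_n = (-1)^n e_n multiplies the n-th Fourier coefficient by (-1)^n, so it
  preserves inner products by Parseval, and it is onto because by Riesz-Fischer every square-summable
  sequence is the coefficient sequence of an L2 function. Finally
  c(s) tau(s)^n / (tau(s)+1)^(n+1) = (-1)^n s^n / (s+1)^(n+1), i.e. J x^s and c(s) x^tau(s) have
  the same Fourier coefficients.
*)

section \<open>Square-integrable functions on the unit interval\<close>

lemma borel_measurable_cnj [measurable (raw)]:
  "f \<in> borel_measurable M \<Longrightarrow> (\<lambda>x. cnj (f x :: complex)) \<in> borel_measurable M"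
  by (rule borel_measurable_continuous_on[where f=cnj]) (auto intro: continuous_intros)

abbreviation I01 :: "real measure" where
  "I01 \<equiv> lebesgue_on {0..1}"

lemma finite_measure_I01: "finite_measure I01"
  by (rule finite_measure_lebesgue_on) auto

lemma borel_measurable_I01: "f \<in> borel_measurable borel \<Longrightarrow> f \<in> borel_measurable I01"
  by (intro measurable_restrict_space1 measurable_completion) simp

lemma AE_I01_pos: "AE x in I01. 0 < x"
proof -
  have "AE x in lebesgue. (x::real) \<noteq> 0"
    by (rule AE_completion[OF AE_lborel_singleton])
  then have "AE x in lebesgue. x \<in> {0..1::real} \<longrightarrow> 0 < x"
    by (rule eventually_mono) (auto simp: order_less_le)
  then show ?thesis
    by (simp add: AE_restrict_space_iff)
qed

lemma L2_iff_I01: "L2 f \<longleftrightarrow> f \<in> borel_measurable I01 \<and> integrable I01 (\<lambda>x. (cmod (f x))^2)"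
  unfolding L2_def set_borel_measurable_def set_integrable_def
  by (simp add: integrable_restrict_space borel_measurable_restrict_space_iff)

lemma l2_inner_I01: "l2_inner f g = integral\<^sup>L I01 (\<lambda>x. cnj (f x) * g x)"
  unfolding l2_inner_def set_lebesgue_integral_def
  by (simp add: integral_restrict_space)

lemma l2_norm_I01: "l2_norm f = sqrt (integral\<^sup>L I01 (\<lambda>x. (cmod (f x))^2))"
  unfolding l2_norm_def set_lebesgue_integral_def
  by (simp add: integral_restrict_space)

lemma l2_eq_iff_AE: "l2_eq f g \<longleftrightarrow> (AE x in I01. f x = g x)"
  unfolding l2_eq_def by (simp add: AE_restrict_space_iff)

lemma L2_measurable: "L2 f \<Longrightarrow> f \<in> borel_measurable I01"
  by (simp add: L2_iff_I01)

lemma L2_integrable_square: "L2 f \<Longrightarrow> integrable I01 (\<lambda>x. (cmod (f x))^2)"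
  by (simp add: L2_iff_I01)

lemma mult_le_sum_squares:
  fixes x y :: real
  assumes "0 \<le> x" "0 \<le> y"
  shows "x * y \<le> x^2 + y^2"
proof -
  have "2 * (x * y) \<le> x^2 + y^2"
    using sum_squares_bound[of x y] by (simp add: mult.assoc)
  then show ?thesis
    using mult_nonneg_nonneg[OF assms] by linarith
qed

lemma L2_integrable:
  assumes "L2 f"
  shows "integrable I01 f"
proof -
  interpret finite_measure I01
    by (rule finite_measure_I01)
  show ?thesis
  proof (rule Bochner_Integration.integrable_bound)
    show "integrable I01 (\<lambda>x. 1 + (cmod (f x))^2)"
      using L2_integrable_square[OF assms] by auto
    show "f \<in> borel_measurable I01"
      using L2_measurable[OF assms] .
    have "cmod z \<le> 1 + (cmod z)^2" for z
      using mult_le_sum_squares[of 1 "cmod z"] by simp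
    then show "AE x in I01. norm (f x) \<le> norm (1 + (cmod (f x))^2)"
      by (intro AE_I2) (simp add: abs_le_iff)
  qed
qed

lemma L2_integrable_mult:
  assumes f: "L2 f" and g: "L2 g"
  shows "integrable I01 (\<lambda>x. f x * g x)"
proof (rule Bochner_Integration.integrable_bound)
  show "integrable I01 (\<lambda>x. (cmod (f x))^2 + (cmod (g x))^2)"
    using L2_integrable_square f g by auto
  show "(\<lambda>x. f x * g x) \<in> borel_measurable I01"
    using L2_measurable[OF f] L2_measurable[OF g] by measurable
  have "cmod a * cmod b \<le> (cmod a)^2 + (cmod b)^2" for a b :: complex
    by (simp add: mult_le_sum_squares)
  then show "AE x in I01. norm (f x * g x) \<le> norm ((cmod (f x))^2 + (cmod (g x))^2)"
    by (intro AE_I2) (simp add: norm_mult)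
qed

lemma L2_cnj: "L2 f \<Longrightarrow> L2 (\<lambda>x. cnj (f x))"
  unfolding L2_iff_I01 by (auto intro: borel_measurable_cnj)

lemma L2_integrable_inner: "L2 f \<Longrightarrow> L2 g \<Longrightarrow> integrable I01 (\<lambda>x. cnj (f x) * g x)"
  by (rule L2_integrable_mult[OF L2_cnj])

lemma L2_lincomb:
  assumes f: "L2 f" and g: "L2 g"
  shows "L2 (\<lambda>x. a * f x + b * g x)"
  unfolding L2_iff_I01
proof
  have [measurable]: "f \<in> borel_measurable I01" "g \<in> borel_measurable I01"
    using L2_measurable f g by auto
  show "(\<lambda>x. a * f x + b * g x) \<in> borel_measurable I01"
    by measurable
  show "integrable I01 (\<lambda>x. (cmod (a * f x + b * g x))^2)"
  proof (rule Bochner_Integration.integrable_bound)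
    show "integrable I01 (\<lambda>x. 2 * (cmod a)^2 * (cmod (f x))^2 + 2 * (cmod b)^2 * (cmod (g x))^2)"
      using L2_integrable_square f g by auto
    show "(\<lambda>x. (cmod (a * f x + b * g x))^2) \<in> borel_measurable I01"
      by measurable
    have "(cmod (a * u + b * v))^2 \<le> 2 * (cmod a)^2 * (cmod u)^2 + 2 * (cmod b)^2 * (cmod v)^2"
      for u v :: complex
    proof -
      have "cmod (a * u + b * v) \<le> cmod a * cmod u + cmod b * cmod v"
        by (metis norm_mult norm_triangle_ineq)
      then have "(cmod (a * u + b * v))^2 \<le> (cmod a * cmod u + cmod b * cmod v)^2"
        by (simp add: power_mono)
      also have "\<dots> \<le> 2 * (cmod a * cmod u)^2 + 2 * (cmod b * cmod v)^2"
        using sum_squares_bound[of "cmod a * cmod u" "cmod b * cmod v"] by (simp add: power2_sum)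
      finally show ?thesis
        by (simp add: power_mult_distrib)
    qed
    then show "AE x in I01. norm ((cmod (a * f x + b * g x))^2)
        \<le> norm (2 * (cmod a)^2 * (cmod (f x))^2 + 2 * (cmod b)^2 * (cmod (g x))^2)"
      by (intro AE_I2) simp
  qed
qed

lemma L2_const: "L2 (\<lambda>x. c)"
proof -
  interpret finite_measure I01
    by (rule finite_measure_I01)
  show ?thesis
    unfolding L2_iff_I01 by simp
qed

lemma L2_mult: "L2 f \<Longrightarrow> L2 (\<lambda>x. a * f x)"
  using L2_lincomb[of f f a 0] by simp

lemma L2_diff: "L2 f \<Longrightarrow> L2 g \<Longrightarrow> L2 (\<lambda>x. f x - g x)"
  using L2_lincomb[of f g 1 "-1"] by simp

lemma L2_sum: "finite A \<Longrightarrow> (\<And>n. n \<in> A \<Longrightarrow> L2 (g n)) \<Longrightarrow> L2 (\<lambda>x. \<Sum>n\<in>A. c n * g n x)"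
proof (induction A rule: finite_induct)
  case empty
  then show ?case
    using L2_const[of 0] by simp
next
  case (insert a A)
  then show ?case
    using L2_lincomb[of "g a" "\<lambda>x. \<Sum>n\<in>A. c n * g n x" "c a" 1] by simp
qed

lemma L2_cong_AE:
  assumes "L2 f" "g \<in> borel_measurable I01" "AE x in I01. f x = g x"
  shows "L2 g"
proof -
  have [measurable]: "f \<in> borel_measurable I01" "g \<in> borel_measurable I01"
    using assms L2_measurable by auto
  have "integrable I01 (\<lambda>x. (cmod (f x))^2) = integrable I01 (\<lambda>x. (cmod (g x))^2)"
    using assms by (intro integrable_cong_AE) (auto elim: AE_mp)
  then show ?thesis
    using assms unfolding L2_iff_I01 by simp
qed

lemma l2_bounded_op_L2: "l2_bounded_op T \<Longrightarrow> L2 f \<Longrightarrow> L2 (T f)"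
  unfolding l2_bounded_op_def by blast

lemma l2_bounded_op_linear:
  "l2_bounded_op T \<Longrightarrow> L2 f \<Longrightarrow> L2 g
    \<Longrightarrow> AE x in I01. T (\<lambda>x. a * f x + b * g x) x = a * T f x + b * T g x"
  unfolding l2_bounded_op_def l2_eq_iff_AE by blast

lemma l2_bounded_op_bound:
  assumes "l2_bounded_op T"
  obtains C where "\<And>f. L2 f \<Longrightarrow> l2_norm (T f) \<le> C * l2_norm f"
  using assms unfolding l2_bounded_op_def by blast

lemma l2_inner_lincomb_right:
  assumes "L2 f" "L2 g" "L2 h"
  shows "l2_inner f (\<lambda>x. a * g x + b * h x) = a * l2_inner f g + b * l2_inner f h"
proof -
  have "(\<lambda>x. cnj (f x) * (a * g x + b * h x)) = (\<lambda>x. a * (cnj (f x) * g x) + b * (cnj (f x) * h x))"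
    by (auto simp: algebra_simps)
  then show ?thesis
    unfolding l2_inner_I01 using L2_integrable_inner assms by simp
qed

lemma l2_inner_commute: "l2_inner g f = cnj (l2_inner f g)"
proof -
  have "cnj (integral\<^sup>L I01 (\<lambda>x. cnj (f x) * g x)) = integral\<^sup>L I01 (\<lambda>x. cnj (cnj (f x) * g x))"
    by (simp only: Bochner_Integration.integral_cnj)
  then show ?thesis
    unfolding l2_inner_I01 by (simp add: mult.commute)
qed

lemma l2_inner_lincomb_left:
  assumes "L2 f" "L2 g" "L2 h"
  shows "l2_inner (\<lambda>x. a * g x + b * h x) f = cnj a * l2_inner g f + cnj b * l2_inner h f"
  by (subst l2_inner_commute, subst l2_inner_lincomb_right[OF assms])
    (simp add: l2_inner_commute[of f g] l2_inner_commute[of f h])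

lemma l2_inner_diff_right:
  assumes "L2 f" "L2 g" "L2 h"
  shows "l2_inner f (\<lambda>x. g x - h x) = l2_inner f g - l2_inner f h"
  using l2_inner_lincomb_right[OF assms, of 1 "-1"] by simp

lemma l2_inner_mult_right: "l2_inner f (\<lambda>x. c * g x) = c * l2_inner f g"
  unfolding l2_inner_I01 by (simp add: mult.left_commute)

lemma l2_inner_sum_right:
  assumes "finite A" "L2 f" "\<And>n. n \<in> A \<Longrightarrow> L2 (g n)"
  shows "l2_inner f (\<lambda>x. \<Sum>n\<in>A. c n * g n x) = (\<Sum>n\<in>A. c n * l2_inner f (g n))"
  using assms
proof (induction A rule: finite_induct)
  case empty
  then show ?case
    unfolding l2_inner_I01 by simp
next
  case (insert a A)
  have "L2 (\<lambda>x. \<Sum>n\<in>A. c n * g n x)"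
    using insert by (intro L2_sum) auto
  then have "l2_inner f (\<lambda>x. c a * g a x + 1 * (\<Sum>n\<in>A. c n * g n x))
      = c a * l2_inner f (g a) + 1 * l2_inner f (\<lambda>x. \<Sum>n\<in>A. c n * g n x)"
    using insert by (intro l2_inner_lincomb_right) auto
  then show ?case
    using insert by simp
qed

lemma l2_norm_nonneg: "0 \<le> l2_norm f"
  unfolding l2_norm_I01 by simp

lemma l2_norm_square: "(l2_norm f)^2 = integral\<^sup>L I01 (\<lambda>x. (cmod (f x))^2)"
  unfolding l2_norm_I01 by (simp add: integral_nonneg_AE)

lemma l2_inner_self: "l2_inner f f = complex_of_real ((l2_norm f)^2)"
proof -
  have "cnj z * z = complex_of_real ((cmod z)^2)" for z
    by (metis complex_norm_square mult.commute of_real_power)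
  then show ?thesis
    unfolding l2_inner_I01 l2_norm_square by (simp only: integral_complex_of_real)
qed

lemma l2_norm_eq_iff_inner_eq: "l2_norm f = l2_norm g \<longleftrightarrow> l2_inner f f = l2_inner g g"
  using l2_norm_nonneg[of f] l2_norm_nonneg[of g]
  by (simp add: l2_inner_self power2_eq_iff_nonneg del: of_real_power)

lemma AE_zero_if_l2_norm_eq_0:
  assumes "L2 f" "l2_norm f = 0"
  shows "AE x in I01. f x = 0"
proof -
  have "integral\<^sup>L I01 (\<lambda>x. (cmod (f x))^2) = 0"
    using assms(2) l2_norm_square[of f] by simp
  then have "AE x in I01. (cmod (f x))^2 = 0"
    using integral_nonneg_eq_0_iff_AE[of I01 "\<lambda>x. (cmod (f x))^2"] L2_integrable_square[OF assms(1)]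
    by simp
  then show ?thesis
    by simp
qed

lemma l2_inner_eq_0_if_AE_zero:
  assumes "f \<in> borel_measurable I01" "g \<in> borel_measurable I01" "AE x in I01. f x = 0"
  shows "l2_inner f g = 0"
proof -
  have "integral\<^sup>L I01 (\<lambda>x. cnj (f x) * g x) = integral\<^sup>L I01 (\<lambda>x. 0)"
    using assms by (intro integral_cong_AE) (auto elim: AE_mp)
  then show ?thesis
    unfolding l2_inner_I01 by simp
qed

lemma l2_cauchy_schwarz:
  assumes f: "L2 f" and g: "L2 g"
  shows "cmod (l2_inner f g) \<le> l2_norm f * l2_norm g"
proof (cases "l2_norm f = 0 \<or> l2_norm g = 0")
  case True
  then have "l2_inner f g = 0"
    using l2_inner_eq_0_if_AE_zero[OF L2_measurable[OF f] L2_measurable[OF g]]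
      l2_inner_eq_0_if_AE_zero[OF L2_measurable[OF g] L2_measurable[OF f]]
      AE_zero_if_l2_norm_eq_0 f g l2_inner_commute[of g f]
    by fastforce
  then show ?thesis
    using l2_norm_nonneg by simp
next
  case False
  define A B where "A = l2_norm f" and "B = l2_norm g"
  have "A > 0" "B > 0"
    using False l2_norm_nonneg unfolding A_def B_def by (auto simp: order_le_less)
  define t where "t = B / A"
  have t: "t > 0"
    using \<open>A > 0\<close> \<open>B > 0\<close> by (simp add: t_def)
  \<comment> \<open>AM-GM with the weight t that makes it sharp\<close>
  have am_gm: "cmod (cnj (f x) * g x) \<le> (t * (cmod (f x))^2 + (cmod (g x))^2 / t) / 2" for x
  proof -
    have "0 \<le> (sqrt t * cmod (f x) - cmod (g x) / sqrt t)^2"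
      by simp
    also have "\<dots> = t * (cmod (f x))^2 + (cmod (g x))^2 / t - 2 * cmod (f x) * cmod (g x)"
      using t by (simp add: power2_diff power_mult_distrib power_divide field_simps)
    finally show ?thesis
      by (simp add: norm_mult)
  qed
  have "cmod (l2_inner f g) \<le> integral\<^sup>L I01 (\<lambda>x. cmod (cnj (f x) * g x))"
    unfolding l2_inner_I01 by (rule integral_norm_bound)
  also have "\<dots> \<le> integral\<^sup>L I01 (\<lambda>x. (t * (cmod (f x))^2 + (cmod (g x))^2 / t) / 2)"
    using L2_integrable_inner[OF f g] L2_integrable_square[OF f] L2_integrable_square[OF g]
    by (intro integral_mono am_gm) auto
  also have "\<dots> = (t * A^2 + B^2 / t) / 2"
    using L2_integrable_square[OF f] L2_integrable_square[OF g]
    unfolding A_def B_def l2_norm_square by simp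
  also have "\<dots> = A * B"
    using \<open>A > 0\<close> \<open>B > 0\<close> unfolding t_def by (simp add: field_simps power2_eq_square)
  finally show ?thesis
    unfolding A_def B_def .
qed

lemma l2_norm_lincomb_square:
  assumes f: "L2 f" and g: "L2 g"
  shows "(l2_norm (\<lambda>x. a * f x + b * g x))^2
    = (cmod a)^2 * (l2_norm f)^2 + (cmod b)^2 * (l2_norm g)^2 + 2 * Re (cnj a * b * l2_inner f g)"
proof -
  have h: "L2 (\<lambda>x. a * f x + b * g x)"
    using L2_lincomb f g by blast
  have norm_sq: "(complex_of_real (cmod z))^2 = z * cnj z" for z
    by (metis complex_norm_square of_real_power)
  have "complex_of_real ((l2_norm (\<lambda>x. a * f x + b * g x))^2)
      = l2_inner (\<lambda>x. a * f x + b * g x) (\<lambda>x. a * f x + b * g x)"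
    by (simp add: l2_inner_self)
  also have "\<dots> = cnj a * l2_inner f (\<lambda>x. a * f x + b * g x) + cnj b * l2_inner g (\<lambda>x. a * f x + b * g x)"
    by (rule l2_inner_lincomb_left[OF h f g])
  also have "\<dots> = cnj a * (a * l2_inner f f + b * l2_inner f g) + cnj b * (a * l2_inner g f + b * l2_inner g g)"
    by (simp add: l2_inner_lincomb_right f g)
  also have "\<dots> = (cmod a)^2 * l2_inner f f + (cmod b)^2 * l2_inner g g
      + (cnj a * b * l2_inner f g + cnj (cnj a * b * l2_inner f g))"
    by (simp add: l2_inner_commute[of g f] norm_sq algebra_simps)
  also have "\<dots> = complex_of_real ((cmod a)^2 * (l2_norm f)^2 + (cmod b)^2 * (l2_norm g)^2
      + 2 * Re (cnj a * b * l2_inner f g))"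
    by (simp only: l2_inner_self complex_add_cnj) simp
  finally show ?thesis
    by (simp only: of_real_eq_iff)
qed

lemma l2_norm_mult: "l2_norm (\<lambda>x. c * f x) = cmod c * l2_norm f"
proof -
  have "integral\<^sup>L I01 (\<lambda>x. (cmod (c * f x))^2) = (cmod c)^2 * integral\<^sup>L I01 (\<lambda>x. (cmod (f x))^2)"
    by (simp add: norm_mult power_mult_distrib)
  then show ?thesis
    unfolding l2_norm_I01 by (simp add: real_sqrt_mult)
qed

lemma l2_norm_diff_commute: "l2_norm (\<lambda>x. f x - g x) = l2_norm (\<lambda>x. g x - f x)"
  using l2_norm_mult[of "-1" "\<lambda>x. g x - f x"] by simp

lemma l2_norm_cong_AE:
  assumes "f \<in> borel_measurable I01" "g \<in> borel_measurable I01" "AE x in I01. f x = g x"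
  shows "l2_norm f = l2_norm g"
proof -
  have "integral\<^sup>L I01 (\<lambda>x. (cmod (f x))^2) = integral\<^sup>L I01 (\<lambda>x. (cmod (g x))^2)"
    using assms by (intro integral_cong_AE) (auto elim: AE_mp)
  then show ?thesis
    unfolding l2_norm_I01 by simp
qed

lemma l2_inner_cong_AE:
  assumes "f \<in> borel_measurable I01" "g \<in> borel_measurable I01" "h \<in> borel_measurable I01"
    and "AE x in I01. f x = g x"
  shows "l2_inner h f = l2_inner h g"
proof -
  have "integral\<^sup>L I01 (\<lambda>x. cnj (h x) * f x) = integral\<^sup>L I01 (\<lambda>x. cnj (h x) * g x)"
    using assms by (intro integral_cong_AE) (auto elim: AE_mp)
  then show ?thesis
    unfolding l2_inner_I01 by simp
qed

lemma l2_inner_diff_le: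
  assumes "L2 f" "L2 g" "L2 h"
  shows "cmod (l2_inner h f - l2_inner h g) \<le> l2_norm h * l2_norm (\<lambda>x. f x - g x)"
  using l2_cauchy_schwarz[OF assms(3) L2_diff[OF assms(1,2)]] l2_inner_diff_right[OF assms(3,1,2)]
  by simp

lemma integral_norm_le_l2_norm:
  assumes "L2 f"
  shows "integral\<^sup>L I01 (\<lambda>x. cmod (f x)) \<le> l2_norm f"
proof -
  interpret finite_measure I01
    by (rule finite_measure_I01)
  have norm_f: "L2 (\<lambda>x. complex_of_real (cmod (f x)))"
    using L2_measurable[OF assms] L2_integrable_square[OF assms] unfolding L2_iff_I01 by simp measurable
  have "l2_norm (\<lambda>x. 1) = 1"
    unfolding l2_norm_I01 by (simp add: measure_restrict_space)
  moreover have "l2_norm (\<lambda>x. complex_of_real (cmod (f x))) = l2_norm f"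
    unfolding l2_norm_I01 by simp
  moreover have "l2_inner (\<lambda>x. 1) (\<lambda>x. complex_of_real (cmod (f x)))
      = complex_of_real (integral\<^sup>L I01 (\<lambda>x. cmod (f x)))"
    unfolding l2_inner_I01 by simp
  ultimately show ?thesis
    using l2_cauchy_schwarz[OF L2_const[of 1] norm_f] by (simp add: abs_le_iff)
qed

lemma L2_if_nn_integral_le:
  assumes g: "g \<in> borel_measurable I01" and e: "0 \<le> e"
    and fin: "(\<integral>\<^sup>+x. ennreal ((cmod (g x))^2) \<partial>I01) \<le> ennreal (e^2)"
  shows "L2 g" "l2_norm g \<le> e"
proof -
  have [measurable]: "g \<in> borel_measurable I01"
    using g .
  have g_square: "integrable I01 (\<lambda>x. (cmod (g x))^2)"
    by (rule integrableI_bounded) (use fin in \<open>auto simp: top.not_eq_extremum intro: le_less_trans\<close>)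
  then show "L2 g"
    unfolding L2_iff_I01 using g by simp
  have "ennreal ((l2_norm g)^2) = (\<integral>\<^sup>+x. ennreal ((cmod (g x))^2) \<partial>I01)"
    unfolding l2_norm_square by (rule nn_integral_eq_integral[symmetric]) (use g_square in auto)
  then have "ennreal ((l2_norm g)^2) \<le> ennreal (e^2)"
    using fin by simp
  then have "(l2_norm g)^2 \<le> e^2"
    using e by (simp add: ennreal_le_iff)
  then show "l2_norm g \<le> e"
    using e l2_norm_nonneg power2_le_imp_le by blast
qed

lemma L2_norm_le_if_AE_tendsto:
  assumes u: "\<And>i. L2 (u i)" and g: "g \<in> borel_measurable I01"
    and lim: "AE x in I01. (\<lambda>i. u i x) \<longlonglongrightarrow> g x"
    and bound: "eventually (\<lambda>i. l2_norm (u i) \<le> e) sequentially"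
  shows "L2 g" "l2_norm g \<le> e"
proof -
  have [measurable]: "\<And>i. u i \<in> borel_measurable I01" "g \<in> borel_measurable I01"
    using u g L2_measurable by auto
  have "AE x in I01. liminf (\<lambda>i. ennreal ((cmod (u i x))^2)) = ennreal ((cmod (g x))^2)"
    using lim
  proof eventually_elim
    case (elim x)
    then have "(\<lambda>i. ennreal ((cmod (u i x))^2)) \<longlonglongrightarrow> ennreal ((cmod (g x))^2)"
      by (intro tendsto_ennrealI tendsto_intros)
    then show ?case
      by (simp add: lim_imp_Liminf)
  qed
  then have "(\<integral>\<^sup>+x. ennreal ((cmod (g x))^2) \<partial>I01) = (\<integral>\<^sup>+x. liminf (\<lambda>i. ennreal ((cmod (u i x))^2)) \<partial>I01)"
    by (intro nn_integral_cong_AE) (auto elim: AE_mp)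
  also have "\<dots> \<le> liminf (\<lambda>i. \<integral>\<^sup>+x. ennreal ((cmod (u i x))^2) \<partial>I01)"
    by (rule nn_integral_liminf) simp
  also have "\<dots> \<le> ennreal (e^2)"
  proof (rule Liminf_le)
    show "\<forall>\<^sub>F i in sequentially. (\<integral>\<^sup>+x. ennreal ((cmod (u i x))^2) \<partial>I01) \<le> ennreal (e^2)"
      using bound
    proof eventually_elim
      case (elim i)
      have "(\<integral>\<^sup>+x. ennreal ((cmod (u i x))^2) \<partial>I01) = ennreal ((l2_norm (u i))^2)"
        unfolding l2_norm_square
        by (rule nn_integral_eq_integral) (use L2_integrable_square[OF u] in auto)
      also have "\<dots> \<le> ennreal (e^2)"
        using elim l2_norm_nonneg by (intro ennreal_leI power_mono) auto
      finally show ?case .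
    qed
  qed simp
  finally have "(\<integral>\<^sup>+x. ennreal ((cmod (g x))^2) \<partial>I01) \<le> ennreal (e^2)" .
  moreover obtain i where "l2_norm (u i) \<le> e"
    using bound by (auto simp: eventually_sequentially)
  then have "0 \<le> e"
    using l2_norm_nonneg order_trans by blast
  ultimately show "L2 g" "l2_norm g \<le> e"
    using L2_if_nn_integral_le[OF g] by auto
qed

lemma L2_Cauchy_AE_convergent_subseq:
  fixes s :: "nat \<Rightarrow> real \<Rightarrow> complex"
  assumes s: "\<And>n. L2 (s n)"
    and Cauchy: "\<And>e. e > 0 \<Longrightarrow> \<exists>N. \<forall>m\<ge>N. \<forall>n\<ge>N. l2_norm (\<lambda>x. s m x - s n x) < e"
  obtains r g where "strict_mono r" "g \<in> borel_measurable I01" "AE x in I01. (\<lambda>i. s (r i) x) \<longlonglongrightarrow> g x"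
proof -
  have [measurable]: "\<And>n. s n \<in> borel_measurable I01"
    using s L2_measurable by auto
  have "\<exists>N. \<forall>i\<ge>N. \<forall>j\<ge>N. integral\<^sup>L I01 (\<lambda>x. norm (s i x - s j x)) < e" if "e > 0" for e
    using Cauchy[OF that] integral_norm_le_l2_norm[OF L2_diff[OF s s]] by (meson order.strict_trans1)
  then obtain r where r: "strict_mono r" and "AE x in I01. Cauchy (\<lambda>i. s (r i) x)"
    using cauchy_L1_AE_cauchy_subseq[of I01 s] s L2_integrable by blast
  define g where "g x = lim (\<lambda>i. s (r i) x)" for x
  have "g \<in> borel_measurable I01"
    unfolding g_def by measurable
  moreover have "AE x in I01. (\<lambda>i. s (r i) x) \<longlonglongrightarrow> g x"
    using \<open>AE x in I01. Cauchy _\<close> unfolding g_def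
    by eventually_elim (simp add: Cauchy_convergent_iff convergent_LIMSEQ_iff)
  ultimately show ?thesis
    using that r by blast
qed

lemma L2_Cauchy_convergent:
  assumes s: "\<And>n. L2 (s n)"
    and Cauchy: "\<And>e. e > 0 \<Longrightarrow> \<exists>N. \<forall>m\<ge>N. \<forall>n\<ge>N. l2_norm (\<lambda>x. s m x - s n x) < e"
  shows "\<exists>g. L2 g \<and> (\<lambda>n. l2_norm (\<lambda>x. s n x - g x)) \<longlonglongrightarrow> 0"
proof -
  obtain r g where r: "strict_mono r" and [measurable]: "g \<in> borel_measurable I01"
    and lim: "AE x in I01. (\<lambda>i. s (r i) x) \<longlonglongrightarrow> g x"
    using L2_Cauchy_AE_convergent_subseq[OF s Cauchy] by blast
  have [measurable]: "\<And>n. s n \<in> borel_measurable I01"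
    using s L2_measurable by auto
  have close: "\<exists>N. \<forall>n\<ge>N. L2 (\<lambda>x. s n x - g x) \<and> l2_norm (\<lambda>x. s n x - g x) \<le> e" if e: "e > 0" for e
  proof -
    obtain N where N: "\<forall>m\<ge>N. \<forall>n\<ge>N. l2_norm (\<lambda>x. s m x - s n x) < e"
      using Cauchy[OF e] by blast
    have "L2 (\<lambda>x. s n x - g x) \<and> l2_norm (\<lambda>x. s n x - g x) \<le> e" if n: "n \<ge> N" for n
    proof -
      have u: "\<And>i. L2 (\<lambda>x. s n x - s (r i) x)"
        by (intro L2_diff s)
      have m: "(\<lambda>x. s n x - g x) \<in> borel_measurable I01"
        by measurable
      have l: "AE x in I01. (\<lambda>i. s n x - s (r i) x) \<longlonglongrightarrow> s n x - g x"
        using lim by eventually_elim (intro tendsto_intros)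
      have "\<forall>\<^sub>F i in sequentially. N \<le> r i"
        by (rule eventually_compose_filterlim[OF eventually_ge_at_top filterlim_subseq[OF r]])
      then have b: "\<forall>\<^sub>F i in sequentially. l2_norm (\<lambda>x. s n x - s (r i) x) \<le> e"
        by eventually_elim (use N n in \<open>simp add: less_imp_le\<close>)
      show ?thesis
        using L2_norm_le_if_AE_tendsto[OF u m l b] by blast
    qed
    then show ?thesis
      by blast
  qed
  obtain N where "L2 (\<lambda>x. s N x - g x)"
    using close[of 1] by auto
  then have "L2 (\<lambda>x. s N x - (s N x - g x))"
    using L2_diff s by blast
  then have "L2 g"
    by simp
  moreover have "(\<lambda>n. l2_norm (\<lambda>x. s n x - g x)) \<longlonglongrightarrow> 0"
  proof (rule LIMSEQ_I)
    fix e :: real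
    assume "0 < e"
    then obtain N where "\<forall>n\<ge>N. l2_norm (\<lambda>x. s n x - g x) \<le> e / 2"
      using close[of "e / 2"] by auto
    then show "\<exists>N. \<forall>n\<ge>N. norm (l2_norm (\<lambda>x. s n x - g x) - 0) < e"
      using \<open>0 < e\<close> l2_norm_nonneg by (auto intro!: exI[of _ N])
  qed
  ultimately show ?thesis
    by blast
qed


section \<open>Logarithmic monomials\<close>

definition log_monomial :: "nat \<Rightarrow> complex \<Rightarrow> real \<Rightarrow> complex" where
  "log_monomial j s x = complex_of_real (ln x) ^ j * exp (s * complex_of_real (ln x))"

lemma borel_measurable_log_monomial [measurable]: "log_monomial j s \<in> borel_measurable borel"
  unfolding log_monomial_def by measurable

lemma norm_log_monomial: "0 < x \<Longrightarrow> cmod (log_monomial j s x) = \<bar>ln x\<bar> ^ j * x powr Re s"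
  unfolding log_monomial_def by (simp add: norm_mult norm_power powr_def)

lemma log_monomial_mult: "log_monomial j a x * log_monomial k b x = log_monomial (j + k) (a + b) x"
  unfolding log_monomial_def by (simp add: power_add exp_add distrib_right mult_ac)

lemma log_monomial_at_1: "log_monomial j s 1 = (if j = 0 then 1 else 0)"
  unfolding log_monomial_def by simp

lemma complex_add_one_neq_0:
  assumes "-1 < Re s"
  shows "s + 1 \<noteq> 0"
proof
  assume "s + 1 = 0"
  then have "Re (s + 1) = 0"
    by simp
  with assms show False
    by simp
qed

lemma power_le_pow_mult_exp:
  assumes "0 \<le> y"
  shows "y ^ k \<le> real k ^ k * exp y"
proof (cases "k = 0")
  case True
  then show ?thesis
    using assms by simp
next
  case False
  have "y / k \<le> exp (y / k)"
    using exp_ge_add_one_self[of "y / k"] by linarith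
  then have "(y / k) ^ k \<le> exp (y / k) ^ k"
    using assms by (intro power_mono) auto
  also have "\<dots> = exp y"
    using False by (simp add: exp_of_nat_mult[symmetric])
  finally have "y ^ k / real k ^ k \<le> exp y"
    by (simp add: power_divide)
  then show ?thesis
    using False by (simp add: field_simps mult.commute)
qed

lemma abs_ln_power_mult_powr_le:
  fixes x \<epsilon> :: real
  assumes x: "0 < x" "x \<le> 1" and \<epsilon>: "0 < \<epsilon>"
  shows "\<bar>ln x\<bar> ^ k * x powr \<epsilon> \<le> (real k / \<epsilon>) ^ k"
proof -
  define y where "y = - ln x"
  have y: "0 \<le> y" and abs_ln: "\<bar>ln x\<bar> = y" and powr: "x powr \<epsilon> = exp (- \<epsilon> * y)"
    using x by (simp_all add: y_def powr_def)
  have "(\<epsilon> * y) ^ k \<le> real k ^ k * exp (\<epsilon> * y)"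
    using y \<epsilon> by (intro power_le_pow_mult_exp) simp
  then have "\<epsilon> ^ k * (y ^ k * exp (- \<epsilon> * y)) \<le> real k ^ k * (exp (\<epsilon> * y) * exp (- \<epsilon> * y))"
    by (simp add: power_mult_distrib mult.assoc)
  also have "exp (\<epsilon> * y) * exp (- \<epsilon> * y) = 1"
    by (simp add: exp_minus_inverse[symmetric] exp_add[symmetric])
  finally have "y ^ k * exp (- \<epsilon> * y) \<le> real k ^ k / \<epsilon> ^ k"
    using \<epsilon> by (simp add: field_simps mult.commute)
  then show ?thesis
    by (simp add: abs_ln powr power_divide)
qed

lemma norm_log_monomial_le:
  assumes "0 < x" "x \<le> 1" "0 < \<epsilon>"
  shows "cmod (log_monomial j s x) \<le> (real j / \<epsilon>) ^ j * x powr (Re s - \<epsilon>)"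
proof -
  have "cmod (log_monomial j s x) = (\<bar>ln x\<bar> ^ j * x powr \<epsilon>) * x powr (Re s - \<epsilon>)"
    using assms by (simp add: norm_log_monomial powr_add[symmetric] mult.assoc)
  also have "\<dots> \<le> (real j / \<epsilon>) ^ j * x powr (Re s - \<epsilon>)"
    using assms by (intro mult_right_mono abs_ln_power_mult_powr_le) auto
  finally show ?thesis .
qed

lemma integrable_powr_I01:
  assumes "-1 < b"
  shows "integrable I01 (\<lambda>x. x powr b)"
proof -
  have "(\<lambda>x. x powr b) integrable_on {0..1}"
    using assms by (intro integrable_on_powr_from_0) auto
  then have "(\<lambda>x. x powr b) absolutely_integrable_on {0..1}"
    by (subst absolutely_integrable_on_iff_nonneg) auto
  then show ?thesis
    by (rule absolutely_integrable_imp_integrable) auto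
qed

lemma integrable_log_monomial:
  assumes s: "-1 < Re s"
  shows "integrable I01 (log_monomial j s)"
proof (rule Bochner_Integration.integrable_bound)
  define \<epsilon> where "\<epsilon> = (Re s + 1) / 2"
  have \<epsilon>: "0 < \<epsilon>" "-1 < Re s - \<epsilon>"
    using s by (simp_all add: \<epsilon>_def field_simps)
  show "integrable I01 (\<lambda>x. (real j / \<epsilon>) ^ j * x powr (Re s - \<epsilon>))"
    using integrable_powr_I01[OF \<epsilon>(2)] by simp
  show "log_monomial j s \<in> borel_measurable I01"
    by (rule borel_measurable_I01) simp
  show "AE x in I01. norm (log_monomial j s x) \<le> norm ((real j / \<epsilon>) ^ j * x powr (Re s - \<epsilon>))"
    using AE_I01_pos
  proof (rule AE_mp, intro AE_I2 impI)
    fix x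
    assume "x \<in> space I01" "0 < x"
    then show "norm (log_monomial j s x) \<le> norm ((real j / \<epsilon>) ^ j * x powr (Re s - \<epsilon>))"
      using norm_log_monomial_le[of x \<epsilon> j s] \<epsilon> by simp
  qed
qed

lemma log_monomial_tendsto_0:
  assumes s: "0 < Re s"
  shows "(log_monomial j s \<longlongrightarrow> 0) (at_right 0)"
proof (rule tendsto_0_le)
  define \<epsilon> where "\<epsilon> = Re s / 2"
  have \<epsilon>: "0 < \<epsilon>" "0 < Re s - \<epsilon>"
    using s by (simp_all add: \<epsilon>_def)
  show "((\<lambda>x::real. x powr (Re s - \<epsilon>)) \<longlongrightarrow> 0) (at_right 0)"
    by (rule tendsto_zero_powrI[OF tendsto_ident_at tendsto_const])
      (use \<epsilon> in \<open>auto simp: eventually_at_filter\<close>)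
  have "eventually (\<lambda>x::real. 0 < x \<and> x < 1) (at_right 0)"
    by (simp add: eventually_at_right_field) (auto intro: exI[of _ 1])
  then show "\<forall>\<^sub>F x in at_right 0. norm (log_monomial j s x) \<le> norm (x powr (Re s - \<epsilon>)) * (real j / \<epsilon>) ^ j"
    by eventually_elim (use norm_log_monomial_le[of _ \<epsilon> j s] \<epsilon> in \<open>simp add: mult.commute\<close>)
qed

lemma has_vector_derivative_log_monomial:
  assumes x: "0 < x" and s1: "s + 1 \<noteq> 0"
  shows "((\<lambda>x. log_monomial j (s + 1) x / (s + 1)) has_vector_derivative
    log_monomial j s x + of_nat j / (s + 1) * log_monomial (j - 1) s x) (at x)"
proof -
  define H where "H w = w ^ j * exp ((s + 1) * w) / (s + 1)" for w :: complex
  define H' where "H' w = (of_nat j * w ^ (j - 1) * exp ((s + 1) * w)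
    + w ^ j * ((s + 1) * exp ((s + 1) * w))) / (s + 1)" for w :: complex
  have "(H has_field_derivative H' w) (at w)" for w
    unfolding H_def H'_def using s1 by (auto intro!: derivative_eq_intros)
  then have H_deriv: "((\<lambda>t. H (of_real t)) has_vector_derivative H' (of_real (ln x))) (at (ln x))"
    by (rule has_vector_derivative_real_field)
  have ln_deriv: "(ln has_vector_derivative (1 / x)) (at x)"
    using x by (auto intro!: derivative_eq_intros simp: has_real_derivative_iff_has_vector_derivative[symmetric])
  have "((\<lambda>t. H (of_real t)) \<circ> ln has_vector_derivative (1 / x) *\<^sub>R H' (of_real (ln x))) (at x)"
    by (rule vector_diff_chain_at[OF ln_deriv H_deriv])
  moreover have "(\<lambda>t. H (of_real t)) \<circ> ln = (\<lambda>x. log_monomial j (s + 1) x / (s + 1))"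
    by (auto simp: H_def log_monomial_def fun_eq_iff)
  moreover have "(1 / x) *\<^sub>R H' (of_real (ln x)) = log_monomial j s x + of_nat j / (s + 1) * log_monomial (j - 1) s x"
  proof -
    have "exp ((s + 1) * complex_of_real (ln x)) = exp (s * complex_of_real (ln x)) * of_real x"
      using x by (simp add: distrib_right exp_add exp_of_real)
    moreover have "complex_of_real x \<noteq> 0"
      using x by simp
    moreover have "complex_of_real x + s * complex_of_real x \<noteq> 0"
      using \<open>complex_of_real x \<noteq> 0\<close> s1 by (metis add.commute mult_eq_0_iff distrib_right mult_1)
    ultimately show ?thesis
      using s1 unfolding H'_def log_monomial_def scaleR_conv_of_real by (simp add: field_simps)
  qed
  ultimately show ?thesis
    by simp
qed

lemma integral_I01_eq_if_has_vector_derivative: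
  fixes F f :: "real \<Rightarrow> 'a::euclidean_space"
  assumes F_cont: "continuous_on {0..1} F"
    and F_deriv: "\<And>x. 0 < x \<Longrightarrow> x < 1 \<Longrightarrow> (F has_vector_derivative f x) (at x)"
    and f: "integrable I01 f"
  shows "integral\<^sup>L I01 f = F 1 - F 0"
proof -
  have "(f has_integral integral\<^sup>L I01 f) {0..1}"
    by (rule has_integral_integral_lebesgue_on[OF f]) simp
  moreover have "(f has_integral F 1 - F 0) {0..1}"
    using F_cont F_deriv by (intro fundamental_theorem_of_calculus_interior) auto
  ultimately show ?thesis
    by (rule has_integral_unique)
qed

text \<open>Integration by parts against the antiderivative (ln x)^j x^(s+1) / (s+1), which vanishes at 0.\<close>

lemma integral_log_monomial_recurrence:
  assumes s: "-1 < Re s"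
  shows "integral\<^sup>L I01 (log_monomial j s) + of_nat j / (s + 1) * integral\<^sup>L I01 (log_monomial (j - 1) s)
    = (if j = 0 then 1 / (s + 1) else 0)"
proof -
  have s1: "s + 1 \<noteq> 0"
    using s by (rule complex_add_one_neq_0)
  define f where "f = (\<lambda>x. log_monomial j s x + of_nat j / (s + 1) * log_monomial (j - 1) s x)"
  define G where "G x = log_monomial j (s + 1) x / (s + 1)" for x
  define F where "F x = (if x = 0 then 0 else G x)" for x
  have F_deriv: "(F has_vector_derivative f x) (at x)" if "0 < x" for x
    unfolding f_def
    by (rule has_vector_derivative_transform_within_open[OF has_vector_derivative_log_monomial[OF that s1], of "{0<..}"])
      (use that in \<open>auto simp: F_def G_def\<close>)
  have "continuous_on {0..1} F"
  proof (rule continuous_on_IccI)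
    have "(G \<longlongrightarrow> 0 / (s + 1)) (at_right 0)"
      unfolding G_def using s by (intro tendsto_divide log_monomial_tendsto_0 tendsto_const s1) simp
    moreover have "eventually (\<lambda>x. G x = F x) (at_right 0)"
      using eventually_at_right_less[of 0] by eventually_elim (simp add: F_def)
    ultimately have "(F \<longlongrightarrow> 0) (at_right 0)"
      by (simp add: Lim_transform_eventually)
    then show "(F \<longlongrightarrow> F 0) (at_right 0)"
      by (simp add: F_def)
    have "isCont F x" if "0 < x" for x
      using has_vector_derivative_continuous[OF F_deriv[OF that]] .
    then show "(F \<longlongrightarrow> F 1) (at_left 1)" "\<And>x. 0 < x \<Longrightarrow> x < 1 \<Longrightarrow> F \<midarrow>x\<rightarrow> F x"
      by (simp_all add: isCont_def filterlim_at_split)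
  qed simp
  moreover have "integrable I01 f"
    unfolding f_def using integrable_log_monomial[OF s] by simp
  ultimately have "integral\<^sup>L I01 f = F 1 - F 0"
    using F_deriv by (intro integral_I01_eq_if_has_vector_derivative) auto
  moreover have "integral\<^sup>L I01 f
      = integral\<^sup>L I01 (log_monomial j s) + of_nat j / (s + 1) * integral\<^sup>L I01 (log_monomial (j - 1) s)"
    unfolding f_def using integrable_log_monomial[OF s] by simp
  moreover have "F 1 - F 0 = (if j = 0 then 1 / (s + 1) else 0)"
    by (simp add: F_def G_def log_monomial_at_1)
  ultimately show ?thesis
    by simp
qed

lemma integral_log_monomial:
  assumes s: "-1 < Re s"
  shows "integral\<^sup>L I01 (log_monomial j s) = (-1) ^ j * fact j / (s + 1) ^ (j + 1)"
proof (induction j)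
  case 0
  then show ?case
    using integral_log_monomial_recurrence[OF s, of 0] by simp
next
  case (Suc j)
  have "integral\<^sup>L I01 (log_monomial (Suc j) s) = - (of_nat (Suc j) / (s + 1) * integral\<^sup>L I01 (log_monomial j s))"
    using integral_log_monomial_recurrence[OF s, of "Suc j"] by (simp add: eq_neg_iff_add_eq_0)
  also have "\<dots> = (-1) ^ Suc j * fact (Suc j) / (s + 1) ^ (Suc j + 1)"
    unfolding Suc.IH using complex_add_one_neq_0[OF s] by (simp add: field_simps minus_divide_left)
  finally show ?case .
qed

lemma L2_log_monomial:
  assumes s: "-1/2 < Re s"
  shows "L2 (log_monomial k s)"
  unfolding L2_iff_I01
proof
  show "log_monomial k s \<in> borel_measurable I01"
    by (rule borel_measurable_I01) simp
  have "integrable I01 (\<lambda>x. cmod (log_monomial (2 * k) (complex_of_real (2 * Re s)) x))"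
    using integrable_log_monomial[of "complex_of_real (2 * Re s)"] s by simp
  then show "integrable I01 (\<lambda>x. (cmod (log_monomial k s x))^2)"
  proof (rule integrable_cong_AE_imp)
    show "(\<lambda>x. (cmod (log_monomial k s x))^2) \<in> borel_measurable I01"
      by (rule borel_measurable_I01) simp
    show "AE x in I01. cmod (log_monomial (2 * k) (complex_of_real (2 * Re s)) x) = (cmod (log_monomial k s x))^2"
      using AE_I01_pos
    proof eventually_elim
      case (elim x)
      have "x powr (Re s * 2) = x powr Re s * x powr Re s"
        by (simp add: powr_add[symmetric] mult.commute)
      moreover have "\<bar>ln x\<bar> ^ (k * 2) = \<bar>ln x\<bar> ^ k * \<bar>ln x\<bar> ^ k"
        by (simp add: power_add[symmetric] mult_2_right)
      ultimately show ?case
        using elim by (simp add: norm_log_monomial power2_eq_square mult_ac)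
    qed
  qed
qed


section \<open>The functions e_n\<close>

lemma alternating_sum_choose_mult_choose:
  "(\<Sum>j\<le>m. (-1) ^ j * of_nat (m choose j) * of_nat (j choose i))
    = (if i = m then (-1) ^ m else (0::'a::comm_ring_1))"
proof (cases "i \<le> m")
  case False
  then have "(\<Sum>j\<le>m. (-1) ^ j * of_nat (m choose j) * of_nat (j choose i)) = (\<Sum>j\<le>m. (0::'a))"
    by (intro sum.cong refl) (simp add: binomial_eq_0)
  then show ?thesis
    using False by simp
next
  case True
  have split: "{..m} = {..<i} \<union> {i..m}"
    using True by auto
  have "(\<Sum>j\<in>{..<i}. (-1) ^ j * of_nat (m choose j) * of_nat (j choose i)) = (0::'a)"
    by (rule sum.neutral) (simp add: binomial_eq_0)
  then have "(\<Sum>j\<le>m. (-1) ^ j * of_nat (m choose j) * of_nat (j choose i))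
      = (\<Sum>j\<in>{i..m}. (-1) ^ j * of_nat (m choose j) * of_nat (j choose i) :: 'a)"
    unfolding split by (subst sum.union_disjoint) auto
  also have "\<dots> = (\<Sum>j\<in>{i..m}. (-1) ^ j * of_nat (m choose i) * of_nat ((m - i) choose (j - i)))"
  proof (rule sum.cong[OF refl])
    fix j
    assume "j \<in> {i..m}"
    then have "(m choose j) * (j choose i) = (m choose i) * ((m - i) choose (j - i))"
      by (intro choose_mult) auto
    then show "(-1) ^ j * of_nat (m choose j) * of_nat (j choose i)
        = ((-1) ^ j * of_nat (m choose i) * of_nat ((m - i) choose (j - i)) :: 'a)"
      by (simp add: mult.assoc flip: of_nat_mult)
  qed
  also have "\<dots> = (\<Sum>l\<in>{0..m - i}. (-1) ^ (l + i) * of_nat (m choose i) * of_nat ((m - i) choose l))"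
  proof -
    have "{i..m} = {0 + i..(m - i) + i}"
      using True by simp
    then show ?thesis
      by (simp only: sum.shift_bounds_cl_nat_ivl) simp
  qed
  also have "\<dots> = (-1) ^ i * of_nat (m choose i) * (\<Sum>l\<le>m - i. (-1) ^ l * of_nat ((m - i) choose l))"
    by (simp add: sum_distrib_left atLeast0AtMost power_add mult_ac)
  also have "\<dots> = (if i = m then (-1) ^ m else 0)"
    using True by (cases "i = m") (simp_all add: choose_alternating_sum)
  finally show ?thesis .
qed

lemma alternating_sum_choose_mult_choose_add:
  "(\<Sum>j\<le>m. (-1) ^ j * of_nat (m choose j) * of_nat ((j + k) choose k))
    = ((-1) ^ m * of_nat (k choose m) :: 'a::comm_ring_1)"
proof -
  have "(j + k) choose k = (\<Sum>i\<le>k. (j choose i) * (k choose i))" for j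
  proof -
    have "(\<Sum>i\<le>k. (j choose i) * (k choose i)) = (\<Sum>i\<le>k. (j choose i) * (k choose (k - i)))"
      by (intro sum.cong refl) (simp add: binomial_symmetric[symmetric])
    then show ?thesis
      using vandermonde[of j k k] by simp
  qed
  then have "(\<Sum>j\<le>m. (-1) ^ j * of_nat (m choose j) * of_nat ((j + k) choose k))
      = (\<Sum>j\<le>m. \<Sum>i\<le>k. (-1) ^ j * of_nat (m choose j) * (of_nat (j choose i) * of_nat (k choose i)) :: 'a)"
    by (simp add: sum_distrib_left)
  also have "\<dots> = (\<Sum>i\<le>k. of_nat (k choose i) * (\<Sum>j\<le>m. (-1) ^ j * of_nat (m choose j) * of_nat (j choose i)))"
    by (subst sum.swap) (simp add: sum_distrib_left mult_ac)
  also have "\<dots> = (\<Sum>i\<le>k. of_nat (k choose i) * (if i = m then (-1) ^ m else 0))"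
    by (simp add: alternating_sum_choose_mult_choose)
  also have "\<dots> = (-1) ^ m * of_nat (k choose m)"
    by (cases "m \<le> k") (auto simp: if_distrib sum.delta binomial_eq_0 cong: if_cong)
  finally show ?thesis .
qed

text \<open>By \<open>integral_log_monomial\<close>, this double sum is the (m, n) entry of the Gram matrix of the e_n.\<close>

lemma e_fun_gram_sum:
  "(\<Sum>j\<le>m. \<Sum>k\<le>n. (real (m choose j) / fact j) * (real (n choose k) / fact k) * ((-1) ^ (j + k) * fact (j + k)))
    = (if m = n then 1 else 0)"
proof -
  have inner: "(\<Sum>j\<le>m. (real (m choose j) / fact j) * ((-1) ^ (j + k) * fact (j + k)))
      = (-1) ^ k * fact k * ((-1) ^ m * real (k choose m))" for k
  proof -
    have "(\<Sum>j\<le>m. (real (m choose j) / fact j) * ((-1) ^ (j + k) * fact (j + k)))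
        = (-1) ^ k * fact k * (\<Sum>j\<le>m. (-1) ^ j * real (m choose j) * real ((j + k) choose k))"
      unfolding sum_distrib_left
    proof (rule sum.cong[OF refl])
      fix j
      have "real ((j + k) choose k) = fact (j + k) / (fact k * fact j)"
        by (subst binomial_fact) auto
      then show "real (m choose j) / fact j * ((-1) ^ (j + k) * fact (j + k))
          = (-1) ^ k * fact k * ((-1) ^ j * real (m choose j) * real ((j + k) choose k))"
        by (simp add: field_simps power_add)
    qed
    then show ?thesis
      by (simp add: alternating_sum_choose_mult_choose_add)
  qed
  have "(\<Sum>j\<le>m. \<Sum>k\<le>n. (real (m choose j) / fact j) * (real (n choose k) / fact k) * ((-1) ^ (j + k) * fact (j + k)))
      = (\<Sum>k\<le>n. (real (n choose k) / fact k) * (\<Sum>j\<le>m. (real (m choose j) / fact j) * ((-1) ^ (j + k) * fact (j + k))))"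
    by (subst sum.swap) (simp add: sum_distrib_left mult_ac)
  also have "\<dots> = (-1) ^ m * (\<Sum>k\<le>n. (-1) ^ k * real (n choose k) * real (k choose m))"
    unfolding inner sum_distrib_left by (intro sum.cong refl) simp
  also have "\<dots> = (if m = n then 1 else 0)"
    by (simp add: alternating_sum_choose_mult_choose flip: power_add)
  finally show ?thesis .
qed

lemma e_fun_eq_sum_log_monomial:
  "e_fun n x = (\<Sum>k\<le>n. complex_of_real (real (n choose k) / fact k) * log_monomial k 0 x)"
  unfolding e_fun_def log_monomial_def by (simp add: of_real_sum)

lemma cnj_e_fun: "cnj (e_fun n x) = e_fun n x"
  unfolding e_fun_def by simp

lemma L2_e_fun: "L2 (e_fun n)"
  unfolding e_fun_eq_sum_log_monomial[abs_def] by (rule L2_sum) (auto intro: L2_log_monomial)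

lemma l2_inner_e_fun: "l2_inner (e_fun m) (e_fun n) = (if m = n then 1 else 0)"
proof -
  define c where "c n k = complex_of_real (real (n choose k) / fact k)" for n k
  have "cnj (e_fun m x) * e_fun n x = (\<Sum>j\<le>m. \<Sum>k\<le>n. c m j * c n k * log_monomial (j + k) 0 x)" for x
    unfolding cnj_e_fun
    by (simp only: e_fun_eq_sum_log_monomial c_def[symmetric]) (simp add: sum_product log_monomial_mult mult_ac)
  then have "l2_inner (e_fun m) (e_fun n)
      = (\<Sum>j\<le>m. \<Sum>k\<le>n. c m j * c n k * integral\<^sup>L I01 (log_monomial (j + k) 0))"
    unfolding l2_inner_I01 by (simp add: integrable_log_monomial integrable_sum)
  also have "\<dots> = complex_of_real (\<Sum>j\<le>m. \<Sum>k\<le>n.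
      (real (m choose j) / fact j) * (real (n choose k) / fact k) * ((-1) ^ (j + k) * fact (j + k)))"
    by (simp add: integral_log_monomial c_def of_real_sum)
  also have "\<dots> = (if m = n then 1 else 0)"
    by (simp only: e_fun_gram_sum) simp
  finally show ?thesis .
qed

lemma mon_eq_log_monomial: "0 < x \<Longrightarrow> mon s x = log_monomial 0 s x"
  unfolding mon_def log_monomial_def by (simp add: powr_def Ln_of_real)

lemma AE_mon_eq_log_monomial: "AE x in I01. mon s x = log_monomial 0 s x"
  using AE_I01_pos by eventually_elim (simp add: mon_eq_log_monomial)

lemma borel_measurable_mon: "mon s \<in> borel_measurable I01"
proof -
  have "(\<lambda>x. if x = 0 then 0 else log_monomial 0 s x) \<in> borel_measurable I01"
    by (rule borel_measurable_I01) measurable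
  moreover have "(\<lambda>x. if x = 0 then 0 else log_monomial 0 s x) \<in> borel_measurable I01
      \<longleftrightarrow> mon s \<in> borel_measurable I01"
    using mon_def[of s 0] by (intro measurable_cong) (auto simp: mon_eq_log_monomial order_less_le)
  ultimately show ?thesis
    by simp
qed

lemma L2_mon: "-1/2 < Re s \<Longrightarrow> L2 (mon s)"
  using AE_mon_eq_log_monomial[of s]
  by (intro L2_cong_AE[OF L2_log_monomial borel_measurable_mon]) (auto elim: AE_mp)

text \<open>The binomial theorem collapses the expansion of e_n.\<close>

lemma l2_inner_e_fun_mon:
  assumes s: "-1 < Re s"
  shows "l2_inner (e_fun n) (mon s) = s ^ n / (s + 1) ^ (n + 1)"
proof -
  have s1: "s + 1 \<noteq> 0"
    using s by (rule complex_add_one_neq_0)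
  define c where "c k = complex_of_real (real (n choose k) / fact k)" for k
  have [measurable]: "e_fun n \<in> borel_measurable I01" "mon s \<in> borel_measurable I01"
    using L2_measurable[OF L2_e_fun] borel_measurable_mon by auto
  have ae: "AE x in I01. cnj (e_fun n x) * mon s x = (\<Sum>k\<le>n. c k * log_monomial k s x)"
    using AE_mon_eq_log_monomial[of s]
  proof eventually_elim
    case (elim x)
    show ?case
      unfolding cnj_e_fun elim
      by (simp only: e_fun_eq_sum_log_monomial c_def[symmetric]) (simp add: sum_distrib_left log_monomial_def mult_ac)
  qed
  have "l2_inner (e_fun n) (mon s) = integral\<^sup>L I01 (\<lambda>x. \<Sum>k\<le>n. c k * log_monomial k s x)"
    unfolding l2_inner_I01
  proof (rule integral_cong_AE[OF _ _ ae])
    show "(\<lambda>x. \<Sum>k\<le>n. c k * log_monomial k s x) \<in> borel_measurable I01"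
      by (rule borel_measurable_I01) measurable
  qed measurable
  also have "\<dots> = (\<Sum>k\<le>n. c k * integral\<^sup>L I01 (log_monomial k s))"
    by (simp add: integrable_log_monomial[OF s] integrable_sum)
  also have "\<dots> = (\<Sum>k\<le>n. of_nat (n choose k) * (- 1 / (s + 1)) ^ k * 1 ^ (n - k)) / (s + 1)"
    unfolding integral_log_monomial[OF s] sum_divide_distrib
  proof (rule sum.cong[OF refl])
    fix k
    have "1 + s \<noteq> 0"
      using s1 by (simp add: add.commute)
    then show "c k * ((- 1) ^ k * fact k / (s + 1) ^ (k + 1))
        = of_nat (n choose k) * (- 1 / (s + 1)) ^ k * 1 ^ (n - k) / (s + 1)"
      unfolding c_def power_divide using s1 by (simp add: field_simps)
  qed
  also have "\<dots> = (- 1 / (s + 1) + 1) ^ n / (s + 1)"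
    by (simp only: binomial_ring)
  also have "\<dots> = s ^ n / (s + 1) ^ (n + 1)"
    using s1 by (simp add: field_simps power_divide)
  finally show ?thesis .
qed


section \<open>Completeness of the e_n\<close>

lemma integrable_bounded_mult:
  fixes f g :: "'a \<Rightarrow> 'b::{real_normed_field, banach, second_countable_topology}"
  assumes f: "integrable M f" and g: "g \<in> borel_measurable M" and B: "AE x in M. norm (g x) \<le> B"
  shows "integrable M (\<lambda>x. g x * f x)"
proof (rule Bochner_Integration.integrable_bound)
  show "integrable M (\<lambda>x. B * norm (f x))"
    using f by simp
  have [measurable]: "f \<in> borel_measurable M"
    using f by auto
  show "(\<lambda>x. g x * f x) \<in> borel_measurable M"
    using g by measurable
  show "AE x in M. norm (g x * f x) \<le> norm (B * norm (f x))"
    using B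
  proof eventually_elim
    case (elim x)
    then have "norm (g x * f x) \<le> B * norm (f x)"
      by (simp add: norm_mult mult_right_mono)
    then show ?case
      by (metis abs_ge_self order_trans real_norm_def)
  qed
qed

lemma integrable_log_monomial_mult: "-1/2 < Re s \<Longrightarrow> L2 f \<Longrightarrow> integrable I01 (\<lambda>x. log_monomial j s x * f x)"
  by (rule L2_integrable_mult[OF L2_log_monomial])

lemma log_moments_vanish_0:
  assumes f: "L2 f" and orth: "\<And>n. l2_inner (e_fun n) f = 0"
  shows "integral\<^sup>L I01 (\<lambda>x. log_monomial k 0 x * f x) = 0"
proof (induction k rule: less_induct)
  case (less k)
  define M where "M j = integral\<^sup>L I01 (\<lambda>x. log_monomial j 0 x * f x)" for j
  define c where "c j = complex_of_real (real (k choose j) / fact j)" for j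
  have "l2_inner (e_fun k) f = integral\<^sup>L I01 (\<lambda>x. \<Sum>j\<le>k. c j * (log_monomial j 0 x * f x))"
    unfolding l2_inner_I01 cnj_e_fun
    by (simp only: e_fun_eq_sum_log_monomial c_def[symmetric]) (simp add: sum_distrib_left sum_distrib_right mult_ac)
  also have "\<dots> = (\<Sum>j\<le>k. c j * M j)"
    unfolding M_def using integrable_log_monomial_mult[of 0 f] f by (simp add: integrable_sum)
  also have "\<dots> = (\<Sum>j<k. c j * M j) + c k * M k"
    by (simp add: lessThan_Suc_atMost[symmetric])
  also have "(\<Sum>j<k. c j * M j) = 0"
    using less.IH unfolding M_def by simp
  finally have "c k * M k = 0"
    using orth[of k] by simp
  moreover have "c k \<noteq> 0"
    unfolding c_def by simp
  ultimately show ?case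
    unfolding M_def by simp
qed

lemma norm_exp_partial_sum_le: "norm (\<Sum>j<N. z ^ j /\<^sub>R fact j) \<le> exp (norm (z :: 'a::real_normed_algebra_1))"
proof -
  have "norm (\<Sum>j<N. z ^ j /\<^sub>R fact j) \<le> (\<Sum>j<N. norm z ^ j /\<^sub>R fact j)"
    by (rule order_trans[OF norm_sum], intro sum_mono) (simp add: mult_left_mono norm_power_ineq)
  also have "\<dots> \<le> (\<Sum>j. norm z ^ j /\<^sub>R fact j)"
    by (rule sum_le_suminf) (use exp_converges[of "norm z"] in \<open>auto simp: sums_iff\<close>)
  also have "\<dots> = exp (norm z)"
    using exp_converges[of "norm z"] by (simp add: sums_iff)
  finally show ?thesis .
qed

lemma log_monomial_exp_partial_sum_tendsto:
  "(\<lambda>N. log_monomial k s x * (\<Sum>j<N. (complex_of_real (ln x) / 4) ^ j /\<^sub>R fact j))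
    \<longlonglongrightarrow> log_monomial k (s + 1/4) x"
proof -
  have lim: "(\<lambda>N. \<Sum>j<N. (complex_of_real (ln x) / 4) ^ j /\<^sub>R fact j) \<longlonglongrightarrow> exp (complex_of_real (ln x) / 4)"
    using exp_converges[of "complex_of_real (ln x) / 4"] by (simp add: sums_def)
  have "log_monomial k (s + 1/4) x = log_monomial k s x * exp (complex_of_real (ln x) / 4)"
    unfolding log_monomial_def by (simp add: exp_add[symmetric] field_simps)
  then show ?thesis
    by (rule tendsto_cong_limit[OF tendsto_mult_left[OF lim]])
qed

lemma norm_log_monomial_exp_partial_sum_le:
  assumes x: "0 < x" "x \<le> 1"
  shows "norm (log_monomial k s x * (\<Sum>j<N. (complex_of_real (ln x) / 4) ^ j /\<^sub>R fact j))
    \<le> cmod (log_monomial k (s - 1/4) x)"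
proof -
  have "norm (log_monomial k s x * (\<Sum>j<N. (complex_of_real (ln x) / 4) ^ j /\<^sub>R fact j))
      \<le> cmod (log_monomial k s x) * exp (norm (complex_of_real (ln x) / 4))"
    unfolding norm_mult by (intro mult_left_mono norm_exp_partial_sum_le) auto
  also have "exp (norm (complex_of_real (ln x) / 4)) = x powr (- 1/4)"
    using x by (simp add: powr_def norm_divide)
  also have "cmod (log_monomial k s x) * x powr (- 1/4) = cmod (log_monomial k (s - 1/4) x)"
    using x by (simp add: norm_log_monomial powr_add[symmetric] mult_ac)
  finally show ?thesis .
qed

text \<open>
  Multiplying by x^(1/4) = exp((ln x)/4) and expanding the exponential: the partial sums are
  dominated by x^(b - 1/4) |ln x|^k |f x|, which is integrable because b - 1/4 > -1/2.
\<close>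

lemma log_moments_vanish_shift:
  assumes f: "L2 f" and b: "0 \<le> b"
    and vanish: "\<And>k. integral\<^sup>L I01 (\<lambda>x. log_monomial k (complex_of_real b) x * f x) = 0"
  shows "integral\<^sup>L I01 (\<lambda>x. log_monomial k (complex_of_real (b + 1/4)) x * f x) = 0"
proof -
  define s where "s N x = (\<Sum>j<N. (1 / (4 ^ j * fact j)) * (log_monomial (k + j) (complex_of_real b) x * f x))"
    for N x
  have s_eq: "s N x = log_monomial k (complex_of_real b) x
      * (\<Sum>j<N. (complex_of_real (ln x) / 4) ^ j /\<^sub>R fact j) * f x" for N x
    unfolding s_def
    by (simp add: sum_distrib_left log_monomial_def power_add power_divide scaleR_conv_of_real field_simps)
  have "integral\<^sup>L I01 (s N) = 0" for N
    unfolding s_def using vanish integrable_log_monomial_mult[of "complex_of_real b" f] f b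
    by (simp add: integrable_sum)
  moreover have "(\<lambda>N. integral\<^sup>L I01 (s N))
      \<longlonglongrightarrow> integral\<^sup>L I01 (\<lambda>x. log_monomial k (complex_of_real (b + 1/4)) x * f x)"
  proof (rule integral_dominated_convergence)
    have [measurable]: "f \<in> borel_measurable I01" "\<And>j s. log_monomial j s \<in> borel_measurable I01"
      using L2_measurable[OF f] borel_measurable_I01[OF borel_measurable_log_monomial] by auto
    show "(\<lambda>x. log_monomial k (complex_of_real (b + 1/4)) x * f x) \<in> borel_measurable I01"
      by measurable
    show "s N \<in> borel_measurable I01" for N
      unfolding s_def by measurable
    show "integrable I01 (\<lambda>x. cmod (log_monomial k (complex_of_real (b - 1/4)) x * f x))"
      using integrable_log_monomial_mult[of "complex_of_real (b - 1/4)" f k] f b by simp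
    show "AE x in I01. (\<lambda>N. s N x) \<longlonglongrightarrow> log_monomial k (complex_of_real (b + 1/4)) x * f x"
      unfolding s_eq using log_monomial_exp_partial_sum_tendsto[of k "complex_of_real b"]
      by (intro AE_I2 tendsto_mult_right) simp
    show "AE x in I01. norm (s N x) \<le> cmod (log_monomial k (complex_of_real (b - 1/4)) x * f x)" for N
      using AE_I01_pos
    proof (rule AE_mp, intro AE_I2 impI)
      fix x
      assume "x \<in> space I01" "0 < x"
      then have "norm (log_monomial k (complex_of_real b) x * (\<Sum>j<N. (complex_of_real (ln x) / 4) ^ j /\<^sub>R fact j))
          \<le> cmod (log_monomial k (complex_of_real (b - 1/4)) x)"
        using norm_log_monomial_exp_partial_sum_le[of x] by simp
      then show "norm (s N x) \<le> cmod (log_monomial k (complex_of_real (b - 1/4)) x * f x)"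
        unfolding s_eq norm_mult[of _ "f x"] by (intro mult_right_mono) auto
    qed
  qed
  ultimately show ?thesis
    by (simp add: LIMSEQ_const_iff)
qed

lemma log_moments_vanish:
  assumes f: "L2 f" and orth: "\<And>n. l2_inner (e_fun n) f = 0"
  shows "integral\<^sup>L I01 (\<lambda>x. log_monomial k (complex_of_real (real m / 4)) x * f x) = 0"
proof (induction m arbitrary: k)
  case 0
  then show ?case
    using log_moments_vanish_0[OF f orth] by simp
next
  case (Suc m)
  have shift: "complex_of_real (real (Suc m) / 4) = complex_of_real (real m / 4 + 1 / 4)"
    by simp
  show ?case
    unfolding shift by (rule log_moments_vanish_shift[OF f _ Suc.IH]) simp
qed

lemma power_moments_vanish:
  assumes f: "L2 f" and orth: "\<And>n. l2_inner (e_fun n) f = 0"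
  shows "integral\<^sup>L I01 (\<lambda>x. complex_of_real (x ^ n) * f x) = 0"
proof -
  have "integral\<^sup>L I01 (\<lambda>x. complex_of_real (x ^ n) * f x)
      = integral\<^sup>L I01 (\<lambda>x. log_monomial 0 (complex_of_real (real (4 * n) / 4)) x * f x)"
  proof (rule integral_cong_AE)
    have [measurable]: "f \<in> borel_measurable I01"
      using L2_measurable[OF f] .
    have [measurable]: "\<And>j s. log_monomial j s \<in> borel_measurable I01"
      by (rule borel_measurable_I01) simp
    have [measurable]: "(\<lambda>x. complex_of_real (x ^ n)) \<in> borel_measurable I01"
      by (rule borel_measurable_I01) simp
    show "(\<lambda>x. complex_of_real (x ^ n) * f x) \<in> borel_measurable I01"
      by measurable
    show "(\<lambda>x. log_monomial 0 (complex_of_real (real (4 * n) / 4)) x * f x) \<in> borel_measurable I01"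
      by measurable
    show "AE x in I01. complex_of_real (x ^ n) * f x
        = log_monomial 0 (complex_of_real (real (4 * n) / 4)) x * f x"
      using AE_I01_pos
    proof eventually_elim
      case (elim x)
      then have "exp (complex_of_real (real n) * complex_of_real (ln x)) = complex_of_real (x ^ n)"
        by (simp add: exp_of_nat_mult exp_of_real)
      then show ?case
        unfolding log_monomial_def by simp
    qed
  qed
  also have "\<dots> = 0"
    by (rule log_moments_vanish[OF f orth])
  finally show ?thesis .
qed

lemma integrable_continuous_mult_I01:
  fixes u h :: "real \<Rightarrow> real"
  assumes h: "continuous_on {0..1} h" and u: "integrable I01 u"
  shows "integrable I01 (\<lambda>x. h x * u x)"
proof -
  have h_meas: "h \<in> borel_measurable I01"
    using h by (rule continuous_imp_measurable_on_sets_lebesgue) simp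
  obtain B where "\<forall>y\<in>h ` {0..1}. norm y \<le> B"
    using compact_imp_bounded[OF compact_continuous_image[OF h compact_Icc]] unfolding bounded_iff by blast
  then have "AE x in I01. norm (h x) \<le> B"
    by (intro AE_I2) auto
  then show ?thesis
    by (rule integrable_bounded_mult[OF u h_meas])
qed

lemma integral_polynomial_mult_eq_0:
  fixes u :: "real \<Rightarrow> real"
  assumes u: "integrable I01 u" and moments: "\<And>n. integral\<^sup>L I01 (\<lambda>x. x ^ n * u x) = 0"
  shows "integral\<^sup>L I01 (\<lambda>x. (\<Sum>i\<le>m. a i * x ^ i) * u x) = 0"
proof -
  have "integrable I01 (\<lambda>x. x ^ i * u x)" for i
    using u by (intro integrable_continuous_mult_I01) (auto intro: continuous_intros)
  then show ?thesis
    using moments by (simp add: sum_distrib_right mult.assoc integral_sum integrable_sum)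
qed

lemma real_eq_0_if_abs_le_mult_epsilon:
  fixes x K :: real
  assumes K: "0 \<le> K" and bound: "\<And>e. 0 < e \<Longrightarrow> \<bar>x\<bar> \<le> e * K"
  shows "x = 0"
proof -
  have "\<bar>x\<bar> \<le> 0 + e" if "0 < e" for e
  proof -
    have "\<bar>x\<bar> \<le> e / (K + 1) * K"
      using bound[of "e / (K + 1)"] that K by simp
    also have "\<dots> \<le> e / (K + 1) * (K + 1)"
      using that K by (intro mult_left_mono) auto
    also have "\<dots> = e"
      using K by simp
    finally show ?thesis
      by simp
  qed
  then show ?thesis
    using field_le_epsilon[of "\<bar>x\<bar>" 0] by simp
qed

lemma integral_continuous_mult_eq_0_if_moments_vanish:
  fixes u h :: "real \<Rightarrow> real"
  assumes u: "integrable I01 u" and moments: "\<And>n. integral\<^sup>L I01 (\<lambda>x. x ^ n * u x) = 0"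
    and h: "continuous_on {0..1} h"
  shows "integral\<^sup>L I01 (\<lambda>x. h x * u x) = 0"
proof (rule real_eq_0_if_abs_le_mult_epsilon)
  show "0 \<le> integral\<^sup>L I01 (\<lambda>x. \<bar>u x\<bar>)"
    by simp
  fix e :: real
  assume "0 < e"
  then obtain p where poly: "real_polynomial_function p" and p: "\<And>x. x \<in> {0..1} \<Longrightarrow> \<bar>h x - p x\<bar> < e"
    using Stone_Weierstrass_real_polynomial_function[OF compact_Icc h] by blast
  then obtain a m where p_eq: "p = (\<lambda>x. \<Sum>i\<le>m. a i * x ^ i)"
    using real_polynomial_function_imp_sum by blast
  have hu: "integrable I01 (\<lambda>x. h x * u x)"
    by (rule integrable_continuous_mult_I01[OF h u])
  have "continuous_on {0..1} p"
    using poly by (simp add: real_polynomial_function_eq continuous_on_polymonial_function)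
  then have pu: "integrable I01 (\<lambda>x. p x * u x)"
    using u by (rule integrable_continuous_mult_I01)
  have "integral\<^sup>L I01 (\<lambda>x. h x * u x) = integral\<^sup>L I01 (\<lambda>x. (h x - p x) * u x)"
    using hu pu integral_polynomial_mult_eq_0[OF u moments, of a m]
    unfolding p_eq by (simp add: left_diff_distrib)
  also have "\<bar>\<dots>\<bar> \<le> integral\<^sup>L I01 (\<lambda>x. e * \<bar>u x\<bar>)"
  proof (rule integral_abs_bound_integral)
    show "integrable I01 (\<lambda>x. (h x - p x) * u x)"
      using hu pu by (simp add: left_diff_distrib)
    show "integrable I01 (\<lambda>x. e * \<bar>u x\<bar>)"
      using u by simp
    show "\<bar>(h x - p x) * u x\<bar> \<le> e * \<bar>u x\<bar>" if "x \<in> space I01" for x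
      using that p[of x] by (simp add: abs_mult mult_right_mono)
  qed
  finally show "\<bar>integral\<^sup>L I01 (\<lambda>x. h x * u x)\<bar> \<le> e * integral\<^sup>L I01 (\<lambda>x. \<bar>u x\<bar>)"
    by simp
qed

lemma continuous_approximation_of_bounded_measurable:
  fixes f :: "real \<Rightarrow> real"
  assumes f: "f \<in> borel_measurable lebesgue" and bound: "\<And>x. \<bar>f x\<bar> \<le> 1"
  obtains g where "\<And>n. continuous_on UNIV (g n)" "\<And>n x. \<bar>g n x\<bar> \<le> 1"
    "AE x in lebesgue. (\<lambda>n. g n x) \<longlonglongrightarrow> f x"
proof -
  have "f measurable_on UNIV"
    by (rule lebesgue_measurable_imp_measurable_on_real[OF f]) simp
  then obtain N g where N: "negligible N" and g: "\<And>n. continuous_on UNIV (g n)"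
      and lim: "\<And>x. x \<notin> N \<Longrightarrow> (\<lambda>n. g n x) \<longlonglongrightarrow> f x"
    unfolding measurable_on_def by auto
  define t where "t n x = max (-1) (min 1 (g n x))" for n x
  show ?thesis
  proof
    show "continuous_on UNIV (t n)" for n
      unfolding t_def by (intro continuous_intros g)
    show "\<bar>t n x\<bar> \<le> 1" for n x
      unfolding t_def by auto
    have "AE x in lebesgue. x \<notin> N"
      using N negligible_iff_null_sets AE_not_in by blast
    then show "AE x in lebesgue. (\<lambda>n. t n x) \<longlonglongrightarrow> f x"
    proof eventually_elim
      case (elim x)
      have "(\<lambda>n. t n x) \<longlonglongrightarrow> max (-1) (min 1 (f x))"
        unfolding t_def by (intro tendsto_max tendsto_min tendsto_const lim elim)
      moreover have "max (-1) (min 1 (f x)) = f x"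
        using bound[of x] by (auto simp: abs_le_iff)
      ultimately show ?case
        by simp
    qed
  qed
qed

lemma AE_zero_if_orthogonal_continuous:
  fixes u :: "real \<Rightarrow> real"
  assumes S: "S \<in> sets lebesgue" and u: "integrable (lebesgue_on S) u"
    and orth: "\<And>h. continuous_on UNIV h \<Longrightarrow> integral\<^sup>L (lebesgue_on S) (\<lambda>x. h x * u x) = 0"
  shows "AE x in lebesgue_on S. u x = 0"
proof -
  have [measurable]: "u \<in> borel_measurable (lebesgue_on S)"
    using u by auto
  have sgn_mult_self: "sgn r * r = \<bar>r\<bar>" for r :: real
    by (cases "0 < r"; cases "r = 0") auto
  define sg where "sg x = (if x \<in> S then sgn (u x) else 0)" for x
  have "(\<lambda>x. sgn (u x)) \<in> borel_measurable (lebesgue_on S)"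
    by measurable
  then have sg_meas: "sg \<in> borel_measurable lebesgue"
    unfolding sg_def using S by (subst (asm) measurable_restrict_space_iff[where c=0]) auto
  obtain g where g_cont: "\<And>n. continuous_on UNIV (g n)" and g_bound: "\<And>n x. \<bar>g n x\<bar> \<le> 1"
      and g_lim: "AE x in lebesgue. (\<lambda>n. g n x) \<longlonglongrightarrow> sg x"
    by (rule continuous_approximation_of_bounded_measurable[OF sg_meas]) (auto simp: sg_def sgn_real_def)
  have [measurable]: "g n \<in> borel_measurable (lebesgue_on S)" for n
    using continuous_imp_measurable_on_sets_lebesgue[OF continuous_on_subset[OF g_cont subset_UNIV] S] .
  have "(\<lambda>n. integral\<^sup>L (lebesgue_on S) (\<lambda>x. g n x * u x)) \<longlonglongrightarrow> integral\<^sup>L (lebesgue_on S) (\<lambda>x. sg x * u x)"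
  proof (rule integral_dominated_convergence[where w="\<lambda>x. \<bar>u x\<bar>"])
    show "(\<lambda>x. sg x * u x) \<in> borel_measurable (lebesgue_on S)"
      using measurable_restrict_space1[OF sg_meas] by measurable
    show "(\<lambda>x. g n x * u x) \<in> borel_measurable (lebesgue_on S)" for n
      by measurable
    show "integrable (lebesgue_on S) (\<lambda>x. \<bar>u x\<bar>)"
      using u by simp
    have "AE x in lebesgue. x \<in> S \<longrightarrow> (\<lambda>n. g n x * u x) \<longlonglongrightarrow> sg x * u x"
      using g_lim by eventually_elim (auto intro: tendsto_mult_right)
    then show "AE x in lebesgue_on S. (\<lambda>n. g n x * u x) \<longlonglongrightarrow> sg x * u x"
      using S by (simp add: AE_restrict_space_iff)
    show "AE x in lebesgue_on S. norm (g n x * u x) \<le> \<bar>u x\<bar>" for n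
      using g_bound by (intro AE_I2) (auto simp: abs_mult intro!: mult_left_le_one_le)
  qed
  moreover have "integral\<^sup>L (lebesgue_on S) (\<lambda>x. g n x * u x) = 0" for n
    using orth g_cont by blast
  ultimately have "integral\<^sup>L (lebesgue_on S) (\<lambda>x. sg x * u x) = 0"
    by (simp add: LIMSEQ_const_iff)
  moreover have "integral\<^sup>L (lebesgue_on S) (\<lambda>x. sg x * u x) = integral\<^sup>L (lebesgue_on S) (\<lambda>x. \<bar>u x\<bar>)"
    using sgn_mult_self by (intro Bochner_Integration.integral_cong refl) (simp add: sg_def)
  ultimately have "integral\<^sup>L (lebesgue_on S) (\<lambda>x. \<bar>u x\<bar>) = 0"
    by simp
  then show ?thesis
    using integral_nonneg_eq_0_iff_AE[of "lebesgue_on S" "\<lambda>x. \<bar>u x\<bar>"] u by simp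
qed

lemma AE_zero_if_moments_vanish:
  fixes u :: "real \<Rightarrow> real"
  assumes u: "integrable I01 u" and moments: "\<And>n. integral\<^sup>L I01 (\<lambda>x. x ^ n * u x) = 0"
  shows "AE x in I01. u x = 0"
proof (rule AE_zero_if_orthogonal_continuous)
  show "integral\<^sup>L I01 (\<lambda>x. h x * u x) = 0" if "continuous_on UNIV h" for h
    using continuous_on_subset[OF that subset_UNIV]
    by (rule integral_continuous_mult_eq_0_if_moments_vanish[OF u moments])
qed (simp_all add: u)

lemma e_fun_complete:
  assumes f: "L2 f" and orth: "\<And>n. l2_inner (e_fun n) f = 0"
  shows "AE x in I01. f x = 0"
proof -
  have fi: "integrable I01 f"
    using L2_integrable[OF f] .
  have x_meas: "(\<lambda>x. complex_of_real (x ^ n)) \<in> borel_measurable I01" for n :: nat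
    by (rule borel_measurable_I01) measurable
  have "AE x in I01. norm (complex_of_real (x ^ n)) \<le> 1" for n :: nat
  proof (rule AE_I2)
    fix x
    assume "x \<in> space I01"
    then show "norm (complex_of_real (x ^ n)) \<le> 1"
      by (simp add: norm_power power_le_one)
  qed
  then have xf: "integrable I01 (\<lambda>x. complex_of_real (x ^ n) * f x)" for n
    by (rule integrable_bounded_mult[OF fi x_meas])
  have "AE x in I01. Re (f x) = 0"
  proof (rule AE_zero_if_moments_vanish)
    show "integral\<^sup>L I01 (\<lambda>x. x ^ n * Re (f x)) = 0" for n
      using integral_Re[OF xf[of n]] power_moments_vanish[OF f orth, of n] by simp
  qed (use fi in simp)
  moreover have "AE x in I01. Im (f x) = 0"
  proof (rule AE_zero_if_moments_vanish)
    show "integral\<^sup>L I01 (\<lambda>x. x ^ n * Im (f x)) = 0" for n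
      using integral_Im[OF xf[of n]] power_moments_vanish[OF f orth, of n] by simp
  qed (use fi in simp)
  ultimately show ?thesis
    by eventually_elim (simp add: complex_eq_iff)
qed


section \<open>Orthonormal sequences in L2([0,1])\<close>

lemma cnj_mult_unimodular:
  assumes "cmod u = 1"
  shows "cnj u * a * (u * b) = a * b"
proof -
  have "cnj u * u = 1"
    using assms complex_norm_square[of u] by (simp add: mult.commute)
  then have "cnj u * a * (u * b) = (cnj u * u) * (a * b)"
    by (simp only: mult_ac)
  then show ?thesis
    using \<open>cnj u * u = 1\<close> by simp
qed

lemma unimodular_mult_cnj:
  assumes "cmod u = 1"
  shows "u * (cnj u * a) = a"
proof -
  have "u * cnj u = 1"
    using assms complex_norm_square[of u] by simp
  then show ?thesis
    by (simp add: mult.assoc[symmetric])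
qed

lemma sum_lessThan_if_ge:
  fixes a :: "nat \<Rightarrow> 'a::comm_monoid_add"
  shows "(\<Sum>k<m. if n \<le> k then a k else 0) = (\<Sum>k=n..<m. a k)"
proof -
  have "(\<Sum>k<m. if n \<le> k then a k else 0) = sum a ({..<m} \<inter> {n..})"
    using sum.inter_restrict[OF finite_lessThan, where g=a and B="{n..}"] by simp
  moreover have "{..<m} \<inter> {n..} = {n..<m}"
    by auto
  ultimately show ?thesis
    by simp
qed

locale l2_orthonormal_seq =
  fixes e :: "nat \<Rightarrow> real \<Rightarrow> complex"
  assumes L2_e: "L2 (e n)"
    and l2_inner_e: "l2_inner (e m) (e n) = (if m = n then 1 else 0)"
begin

abbreviation fourier_coeff :: "nat \<Rightarrow> (real \<Rightarrow> complex) \<Rightarrow> complex" where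
  "fourier_coeff n f \<equiv> l2_inner (e n) f"

definition partial_sum :: "(nat \<Rightarrow> complex) \<Rightarrow> nat \<Rightarrow> real \<Rightarrow> complex" where
  "partial_sum c N x = (\<Sum>n<N. c n * e n x)"

lemma L2_partial_sum: "L2 (partial_sum c N)"
  unfolding partial_sum_def[abs_def] by (rule L2_sum) (auto intro: L2_e)

lemma fourier_coeff_partial_sum: "fourier_coeff m (partial_sum c N) = (if m < N then c m else 0)"
proof -
  have "fourier_coeff m (partial_sum c N) = (\<Sum>n<N. c n * l2_inner (e m) (e n))"
    unfolding partial_sum_def[abs_def] by (rule l2_inner_sum_right) (auto intro: L2_e)
  also have "\<dots> = (\<Sum>n<N. if n = m then c n else 0)"
    by (intro sum.cong refl) (simp add: l2_inner_e)
  also have "\<dots> = (if m < N then c m else 0)"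
    by (simp add: sum.delta)
  finally show ?thesis .
qed

lemma l2_norm_e: "l2_norm (e n) = 1"
proof -
  have "complex_of_real ((l2_norm (e n))^2) = 1"
    using l2_inner_self[of "e n"] l2_inner_e[of n n] by simp
  then have "(l2_norm (e n))^2 = 1"
    by (metis of_real_1 of_real_eq_iff)
  then show ?thesis
    using l2_norm_nonneg[of "e n"] by (simp add: power2_eq_1_iff)
qed

lemma l2_norm_partial_sum: "(l2_norm (partial_sum c N))^2 = (\<Sum>n<N. (cmod (c n))^2)"
proof -
  have "complex_of_real ((l2_norm (partial_sum c N))^2) = l2_inner (partial_sum c N) (partial_sum c N)"
    by (simp add: l2_inner_self)
  also have "\<dots> = (\<Sum>n<N. c n * l2_inner (partial_sum c N) (e n))"
    by (subst (2) partial_sum_def[abs_def], rule l2_inner_sum_right) (auto intro: L2_e L2_partial_sum)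
  also have "\<dots> = (\<Sum>n<N. complex_of_real ((cmod (c n))^2))"
    by (intro sum.cong refl)
      (simp add: l2_inner_commute[of "partial_sum c N"] fourier_coeff_partial_sum flip: complex_norm_square)
  also have "\<dots> = complex_of_real (\<Sum>n<N. (cmod (c n))^2)"
    by simp
  finally show ?thesis
    by (simp only: of_real_eq_iff)
qed

lemma partial_sum_diff:
  assumes "N \<le> M"
  shows "(\<lambda>x. partial_sum c M x - partial_sum c N x) = partial_sum (\<lambda>n. if N \<le> n then c n else 0) M"
proof
  fix x
  have "partial_sum c M x = partial_sum c N x + (\<Sum>n\<in>{N..<M}. c n * e n x)"
    unfolding partial_sum_def using assms by (simp add: lessThan_atLeast0 sum.atLeastLessThan_concat)
  moreover have "partial_sum (\<lambda>n. if N \<le> n then c n else 0) M x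
      = (\<Sum>n<M. if N \<le> n then c n * e n x else 0)"
    unfolding partial_sum_def by (intro sum.cong) auto
  ultimately show "partial_sum c M x - partial_sum c N x = partial_sum (\<lambda>n. if N \<le> n then c n else 0) M x"
    by (simp add: sum_lessThan_if_ge)
qed

lemma partial_sum_convergent:
  assumes summable: "summable (\<lambda>n. (cmod (c n))^2)"
  shows "\<exists>g. L2 g \<and> (\<lambda>N. l2_norm (\<lambda>x. partial_sum c N x - g x)) \<longlonglongrightarrow> 0"
proof (rule L2_Cauchy_convergent[OF L2_partial_sum])
  fix \<epsilon> :: real
  assume "0 < \<epsilon>"
  then obtain N where N: "\<And>m n. N \<le> m \<Longrightarrow> norm (\<Sum>k=m..<n. (cmod (c k))^2) < \<epsilon>^2"
    using summable[unfolded summable_Cauchy] by (meson zero_less_power)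
  have "l2_norm (\<lambda>x. partial_sum c m x - partial_sum c n x) < \<epsilon>" if "N \<le> n" "n \<le> m" for m n
  proof -
    have "(l2_norm (\<lambda>x. partial_sum c m x - partial_sum c n x))^2
        = (\<Sum>k<m. (cmod (if n \<le> k then c k else 0))^2)"
      unfolding partial_sum_diff[OF \<open>n \<le> m\<close>] l2_norm_partial_sum ..
    also have "\<dots> = (\<Sum>k<m. if n \<le> k then (cmod (c k))^2 else 0)"
      by (intro sum.cong) auto
    also have "\<dots> = (\<Sum>k=n..<m. (cmod (c k))^2)"
      by (rule sum_lessThan_if_ge)
    also have "\<dots> < \<epsilon>^2"
      using N[OF \<open>N \<le> n\<close>, of m] by (simp add: sum_nonneg)
    finally show ?thesis
      using \<open>0 < \<epsilon>\<close> l2_norm_nonneg by (meson power_less_imp_less_base less_imp_le)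
  qed
  then show "\<exists>N. \<forall>m\<ge>N. \<forall>n\<ge>N. l2_norm (\<lambda>x. partial_sum c m x - partial_sum c n x) < \<epsilon>"
    by (metis nle_le l2_norm_diff_commute)
qed

lemma l2_inner_tendsto:
  assumes "L2 h" "L2 g" "\<And>N. L2 (s N)" "(\<lambda>N. l2_norm (\<lambda>x. s N x - g x)) \<longlonglongrightarrow> 0"
  shows "(\<lambda>N. l2_inner h (s N)) \<longlonglongrightarrow> l2_inner h g"
proof -
  have "(\<lambda>N. l2_norm h * l2_norm (\<lambda>x. s N x - g x)) \<longlonglongrightarrow> 0"
    using tendsto_mult_right_zero[OF assms(4)] .
  then have "(\<lambda>N. l2_inner h (s N) - l2_inner h g) \<longlonglongrightarrow> 0"
    by (rule tendsto_0_le[where K=1])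
      (use l2_inner_diff_le[OF assms(3) assms(2) assms(1)] l2_norm_nonneg in \<open>auto intro!: always_eventually\<close>)
  then show ?thesis
    by (simp add: LIM_zero_iff)
qed

lemma partial_sum_tendsto:
  assumes "summable (\<lambda>n. (cmod (c n))^2)"
  obtains g where "L2 g" "(\<lambda>N. l2_norm (\<lambda>x. partial_sum c N x - g x)) \<longlonglongrightarrow> 0"
    "\<And>m. fourier_coeff m g = c m"
proof -
  obtain g where g: "L2 g" "(\<lambda>N. l2_norm (\<lambda>x. partial_sum c N x - g x)) \<longlonglongrightarrow> 0"
    using partial_sum_convergent[OF assms] by blast
  have "fourier_coeff m g = c m" for m
  proof (rule LIMSEQ_unique)
    show "(\<lambda>N. fourier_coeff m (partial_sum c N)) \<longlonglongrightarrow> fourier_coeff m g"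
      by (rule l2_inner_tendsto[OF L2_e g(1) L2_partial_sum g(2)])
    have "\<forall>\<^sub>F N in sequentially. fourier_coeff m (partial_sum c N) = c m"
      by (rule eventually_sequentiallyI[of "Suc m"]) (simp add: fourier_coeff_partial_sum)
    then show "(\<lambda>N. fourier_coeff m (partial_sum c N)) \<longlonglongrightarrow> c m"
      by (rule tendsto_eventually)
  qed
  with g that show ?thesis
    by blast
qed

lemma bessel_identity:
  assumes f: "L2 f"
  shows "(l2_norm f)^2
    = (l2_norm (\<lambda>x. f x - partial_sum (\<lambda>n. fourier_coeff n f) N x))^2 + (\<Sum>n<N. (cmod (fourier_coeff n f))^2)"
proof -
  define p where "p = partial_sum (\<lambda>n. fourier_coeff n f) N"
  define g where "g x = f x - p x" for x
  have p: "L2 p"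
    unfolding p_def by (rule L2_partial_sum)
  have g: "L2 g"
    unfolding g_def by (rule L2_diff[OF f p])
  have g_coeff: "fourier_coeff m g = 0" if "m < N" for m
    using that l2_inner_diff_right[OF L2_e f p, of m]
    unfolding g_def p_def by (simp add: fourier_coeff_partial_sum)
  have "l2_inner g p = (\<Sum>n<N. fourier_coeff n f * l2_inner g (e n))"
    unfolding p_def partial_sum_def[abs_def] by (rule l2_inner_sum_right) (auto intro: g L2_e)
  also have "\<dots> = 0"
    using g_coeff by (simp add: l2_inner_commute[of g])
  finally have "l2_inner g p = 0" .
  moreover have "f = (\<lambda>x. 1 * g x + 1 * p x)"
    unfolding g_def by auto
  ultimately have "(l2_norm f)^2 = (l2_norm g)^2 + (l2_norm p)^2"
    using l2_norm_lincomb_square[OF g p, of 1 1] by simp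
  then show ?thesis
    unfolding p_def g_def l2_norm_partial_sum .
qed

lemma summable_fourier_coeff:
  assumes f: "L2 f"
  shows "summable (\<lambda>n. (cmod (fourier_coeff n f))^2)"
proof (rule summableI_nonneg_bounded)
  show "(\<Sum>n<N. (cmod (fourier_coeff n f))^2) \<le> (l2_norm f)^2" for N
    using bessel_identity[OF f, of N] by simp
qed simp

end

locale l2_complete_orthonormal_seq = l2_orthonormal_seq +
  assumes complete: "\<And>f. L2 f \<Longrightarrow> (\<And>n. l2_inner (e n) f = 0) \<Longrightarrow> AE x in I01. f x = 0"
begin

lemma l2_eq_if_fourier_coeff_eq:
  assumes f: "L2 f" and g: "L2 g" and coeff: "\<And>m. fourier_coeff m f = fourier_coeff m g"
  shows "l2_eq f g"
proof -
  have "fourier_coeff m (\<lambda>x. f x - g x) = 0" for m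
    using l2_inner_diff_right[OF L2_e f g] coeff by simp
  then have "AE x in I01. f x - g x = 0"
    by (rule complete[OF L2_diff[OF f g]])
  then show ?thesis
    unfolding l2_eq_iff_AE by eventually_elim simp
qed

lemma partial_sum_fourier_coeff_tendsto:
  assumes f: "L2 f"
  shows "(\<lambda>N. l2_norm (\<lambda>x. partial_sum (\<lambda>n. fourier_coeff n f) N x - f x)) \<longlonglongrightarrow> 0"
proof -
  obtain g where g: "L2 g" "(\<lambda>N. l2_norm (\<lambda>x. partial_sum (\<lambda>n. fourier_coeff n f) N x - g x)) \<longlonglongrightarrow> 0"
      "\<And>m. fourier_coeff m g = fourier_coeff m f"
    using partial_sum_tendsto[OF summable_fourier_coeff[OF f]] by blast
  have "AE x in I01. g x = f x"
    using l2_eq_if_fourier_coeff_eq[OF g(1) f g(3)] by (simp add: l2_eq_iff_AE)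
  then have "l2_norm (\<lambda>x. partial_sum (\<lambda>n. fourier_coeff n f) N x - g x)
      = l2_norm (\<lambda>x. partial_sum (\<lambda>n. fourier_coeff n f) N x - f x)" for N
    using L2_measurable[OF L2_diff[OF L2_partial_sum g(1)]] L2_measurable[OF L2_diff[OF L2_partial_sum f]]
    by (intro l2_norm_cong_AE) (auto elim: AE_mp)
  then show ?thesis
    using g(2) by simp
qed

lemma orthonormal_basis: "l2_orthonormal_basis e"
  unfolding l2_orthonormal_basis_def
proof (intro conjI allI impI)
  fix f :: "real \<Rightarrow> complex" and \<epsilon> :: real
  assume f: "L2 f" and "0 < \<epsilon>"
  then obtain N where
    "\<And>n. N \<le> n \<Longrightarrow> norm (l2_norm (\<lambda>x. partial_sum (\<lambda>n. fourier_coeff n f) n x - f x) - 0) < \<epsilon>"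
    using LIMSEQ_D[OF partial_sum_fourier_coeff_tendsto[OF f]] by blast
  then have "l2_norm (\<lambda>x. f x - (\<Sum>k<N. fourier_coeff k f * e k x)) < \<epsilon>"
    using l2_norm_nonneg by (simp add: l2_norm_diff_commute[of f] partial_sum_def)
  then show "\<exists>N a. l2_norm (\<lambda>x. f x - (\<Sum>k<N. a k * e k x)) < \<epsilon>"
    by (intro exI[of _ N] exI[of _ "\<lambda>k. fourier_coeff k f"])
qed (simp_all add: L2_e l2_inner_e)

lemma parseval:
  assumes f: "L2 f" and g: "L2 g"
  shows "(\<lambda>N. \<Sum>n<N. cnj (fourier_coeff n f) * fourier_coeff n g) \<longlonglongrightarrow> l2_inner f g"
proof -
  have "(\<lambda>N. l2_inner g (partial_sum (\<lambda>n. fourier_coeff n f) N)) \<longlonglongrightarrow> l2_inner g f"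
    by (rule l2_inner_tendsto[OF g f L2_partial_sum partial_sum_fourier_coeff_tendsto[OF f]])
  then have "(\<lambda>N. cnj (l2_inner g (partial_sum (\<lambda>n. fourier_coeff n f) N))) \<longlonglongrightarrow> cnj (l2_inner g f)"
    by (rule tendsto_cnj)
  moreover have "l2_inner g (partial_sum (\<lambda>n. fourier_coeff n f) N)
      = cnj (\<Sum>n<N. cnj (fourier_coeff n f) * fourier_coeff n g)" for N
  proof -
    have "l2_inner g (partial_sum (\<lambda>n. fourier_coeff n f) N) = (\<Sum>n<N. fourier_coeff n f * l2_inner g (e n))"
      unfolding partial_sum_def[abs_def] by (rule l2_inner_sum_right) (auto intro: g L2_e)
    then show ?thesis
      by (simp add: l2_inner_commute[of g])
  qed
  ultimately show ?thesis
    by (simp add: l2_inner_commute[of g f])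
qed

subsection \<open>Diagonal operators\<close>

lemma diagonal_op_partial_sum:
  assumes J: "l2_bounded_op J" and eigen: "\<And>n. l2_eq (J (e n)) (\<lambda>x. \<mu> n * e n x)"
  shows "AE x in I01. J (partial_sum c N) x = partial_sum (\<lambda>n. \<mu> n * c n) N x"
proof (induction N)
  case 0
  have "AE x in I01. J (\<lambda>x. 0 * 0 + 0 * 0) x = 0 * J (\<lambda>x. 0) x + 0 * J (\<lambda>x. 0) x"
    by (rule l2_bounded_op_linear[OF J L2_const L2_const])
  then show ?case
    by (simp add: partial_sum_def)
next
  case (Suc N)
  have partial_sum_Suc: "partial_sum a (Suc N) = (\<lambda>x. 1 * partial_sum a N x + a N * e N x)" for a
    by (simp add: partial_sum_def fun_eq_iff)
  have "AE x in I01. J (\<lambda>x. 1 * partial_sum c N x + c N * e N x) x = 1 * J (partial_sum c N) x + c N * J (e N) x"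
    by (rule l2_bounded_op_linear[OF J L2_partial_sum L2_e])
  moreover have "AE x in I01. J (e N) x = \<mu> N * e N x"
    using eigen unfolding l2_eq_iff_AE by blast
  ultimately show ?case
    using Suc.IH by eventually_elim (simp add: partial_sum_Suc)
qed

lemma fourier_coeff_bounded_op_diff_le:
  assumes J: "l2_bounded_op J" and C: "\<And>f. L2 f \<Longrightarrow> l2_norm (J f) \<le> C * l2_norm f"
    and f: "L2 f" and g: "L2 g"
  shows "cmod (fourier_coeff m (J f) - fourier_coeff m (J g)) \<le> C * l2_norm (\<lambda>x. g x - f x)"
proof -
  note JL = l2_bounded_op_L2[OF J]
  have lin: "L2 (\<lambda>x. 1 * f x + (-1) * g x)"
    by (rule L2_lincomb[OF f g])
  have "AE x in I01. J f x - J g x = J (\<lambda>x. 1 * f x + (-1) * g x) x"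
    using l2_bounded_op_linear[OF J f g, of 1 "-1"] by eventually_elim simp
  have "cmod (fourier_coeff m (J f) - fourier_coeff m (J g)) \<le> l2_norm (\<lambda>x. J f x - J g x)"
    using l2_inner_diff_le[OF JL[OF f] JL[OF g] L2_e, of m] by (simp add: l2_norm_e)
  also have "\<dots> = l2_norm (J (\<lambda>x. 1 * f x + (-1) * g x))"
    using L2_measurable[OF L2_diff[OF JL[OF f] JL[OF g]]] L2_measurable[OF JL[OF lin]]
      \<open>AE x in I01. J f x - J g x = _\<close>
    by (rule l2_norm_cong_AE)
  also have "\<dots> \<le> C * l2_norm (\<lambda>x. g x - f x)"
    using C[OF lin] l2_norm_diff_commute[of f g] by simp
  finally show ?thesis .
qed

text \<open>J is continuous, so the coefficients of J f are the limits of those of the J-images of the partial sums of f.\<close>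

lemma fourier_coeff_diagonal_op:
  assumes J: "l2_bounded_op J" and eigen: "\<And>n. l2_eq (J (e n)) (\<lambda>x. \<mu> n * e n x)" and f: "L2 f"
  shows "fourier_coeff m (J f) = \<mu> m * fourier_coeff m f"
proof -
  obtain C where C: "\<And>f. L2 f \<Longrightarrow> l2_norm (J f) \<le> C * l2_norm f"
    using l2_bounded_op_bound[OF J] by blast
  define S where "S N = partial_sum (\<lambda>n. fourier_coeff n f) N" for N
  have JS: "fourier_coeff m (J (S N)) = (if m < N then \<mu> m * fourier_coeff m f else 0)" for N
  proof -
    have "fourier_coeff m (J (S N)) = fourier_coeff m (partial_sum (\<lambda>n. \<mu> n * fourier_coeff n f) N)"
      unfolding S_def
      by (rule l2_inner_cong_AE[OF L2_measurable[OF l2_bounded_op_L2[OF J L2_partial_sum]]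
            L2_measurable[OF L2_partial_sum] L2_measurable[OF L2_e] diagonal_op_partial_sum[where \<mu>=\<mu>, OF J eigen]])
    then show ?thesis
      by (simp add: fourier_coeff_partial_sum)
  qed
  have "(\<lambda>N. C * l2_norm (\<lambda>x. S N x - f x)) \<longlonglongrightarrow> 0"
    unfolding S_def using tendsto_mult_right_zero[OF partial_sum_fourier_coeff_tendsto[OF f]] .
  then have "cmod (fourier_coeff m (J f) - \<mu> m * fourier_coeff m f) \<le> 0"
  proof (rule LIMSEQ_le_const)
    show "\<exists>N. \<forall>n\<ge>N. cmod (fourier_coeff m (J f) - \<mu> m * fourier_coeff m f) \<le> C * l2_norm (\<lambda>x. S n x - f x)"
    proof (intro exI[of _ "Suc m"] allI impI)
      fix n
      assume "Suc m \<le> n"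
      then show "cmod (fourier_coeff m (J f) - \<mu> m * fourier_coeff m f) \<le> C * l2_norm (\<lambda>x. S n x - f x)"
        using fourier_coeff_bounded_op_diff_le[OF J C f, of "S n" m] JS[of n]
        by (simp add: S_def L2_partial_sum)
    qed
  qed
  then show ?thesis
    by simp
qed

lemma l2_inner_eq_if_unimodular_multiple_coeff:
  assumes unimodular: "\<And>n. cmod (\<mu> n) = 1"
    and f: "L2 f" and g: "L2 g" and f': "L2 f'" and g': "L2 g'"
    and coeff_f': "\<And>n. fourier_coeff n f' = \<mu> n * fourier_coeff n f"
    and coeff_g': "\<And>n. fourier_coeff n g' = \<mu> n * fourier_coeff n g"
  shows "l2_inner f' g' = l2_inner f g"
proof -
  have "(\<lambda>N. \<Sum>n<N. cnj (fourier_coeff n f') * fourier_coeff n g')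
      = (\<lambda>N. \<Sum>n<N. cnj (fourier_coeff n f) * fourier_coeff n g)"
    by (simp add: coeff_f' coeff_g' cnj_mult_unimodular unimodular)
  then have "(\<lambda>N. \<Sum>n<N. cnj (fourier_coeff n f) * fourier_coeff n g) \<longlonglongrightarrow> l2_inner f' g'"
    using parseval[OF f' g'] by simp
  then show ?thesis
    using parseval[OF f g] by (rule LIMSEQ_unique)
qed

text \<open>For L2 f and bounded \<mu> the SOME is attained, by \<open>partial_sum_tendsto\<close>.\<close>

definition multiplier_op :: "(nat \<Rightarrow> complex) \<Rightarrow> (real \<Rightarrow> complex) \<Rightarrow> real \<Rightarrow> complex" where
  "multiplier_op \<mu> f = (if L2 f then SOME g. L2 g \<and> (\<forall>m. fourier_coeff m g = \<mu> m * fourier_coeff m f) else (\<lambda>x. 0))"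

lemma multiplier_op:
  assumes unimodular: "\<And>n. cmod (\<mu> n) = 1" and f: "L2 f"
  shows L2_multiplier_op: "L2 (multiplier_op \<mu> f)"
    and fourier_coeff_multiplier_op: "fourier_coeff m (multiplier_op \<mu> f) = \<mu> m * fourier_coeff m f"
proof -
  have "summable (\<lambda>n. (cmod (\<mu> n * fourier_coeff n f))^2)"
    using summable_fourier_coeff[OF f] by (simp add: norm_mult unimodular)
  then obtain g where "L2 g" "\<And>m. fourier_coeff m g = \<mu> m * fourier_coeff m f"
    by (rule partial_sum_tendsto) blast
  then have ex: "\<exists>g. L2 g \<and> (\<forall>m. fourier_coeff m g = \<mu> m * fourier_coeff m f)"
    by blast
  have "L2 (multiplier_op \<mu> f) \<and> (\<forall>m. fourier_coeff m (multiplier_op \<mu> f) = \<mu> m * fourier_coeff m f)"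
    unfolding multiplier_op_def using f someI_ex[OF ex] by simp
  then show "L2 (multiplier_op \<mu> f)" "fourier_coeff m (multiplier_op \<mu> f) = \<mu> m * fourier_coeff m f"
    by auto
qed

lemma multiplier_op_bounded:
  assumes unimodular: "\<And>n. cmod (\<mu> n) = 1"
  shows "l2_bounded_op (multiplier_op \<mu>)"
  unfolding l2_bounded_op_def
proof (intro conjI allI impI)
  fix f
  assume "L2 f"
  then show "L2 (multiplier_op \<mu> f)"
    by (rule L2_multiplier_op[where \<mu>=\<mu>, OF unimodular])
next
  fix f g :: "real \<Rightarrow> complex" and a b :: complex
  assume f: "L2 f" and g: "L2 g"
  note L2_M = L2_multiplier_op[where \<mu>=\<mu>, OF unimodular]
    and coeff_M = fourier_coeff_multiplier_op[where \<mu>=\<mu>, OF unimodular]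
  have fg: "L2 (\<lambda>x. a * f x + b * g x)"
    by (rule L2_lincomb[OF f g])
  show "l2_eq (multiplier_op \<mu> (\<lambda>x. a * f x + b * g x)) (\<lambda>x. a * multiplier_op \<mu> f x + b * multiplier_op \<mu> g x)"
  proof (rule l2_eq_if_fourier_coeff_eq)
    show "L2 (multiplier_op \<mu> (\<lambda>x. a * f x + b * g x))"
      by (rule L2_M[OF fg])
    show "L2 (\<lambda>x. a * multiplier_op \<mu> f x + b * multiplier_op \<mu> g x)"
      by (rule L2_lincomb[OF L2_M[OF f] L2_M[OF g]])
    show "fourier_coeff m (multiplier_op \<mu> (\<lambda>x. a * f x + b * g x))
        = fourier_coeff m (\<lambda>x. a * multiplier_op \<mu> f x + b * multiplier_op \<mu> g x)" for m
      unfolding coeff_M[OF fg] l2_inner_lincomb_right[OF L2_e f g]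
        l2_inner_lincomb_right[OF L2_e L2_M[OF f] L2_M[OF g]] coeff_M[OF f] coeff_M[OF g]
      by (simp add: algebra_simps)
  qed
next
  have "l2_norm (multiplier_op \<mu> f) = l2_norm f" if f: "L2 f" for f
    unfolding l2_norm_eq_iff_inner_eq
    using L2_multiplier_op[where \<mu>=\<mu>, OF unimodular f] fourier_coeff_multiplier_op[where \<mu>=\<mu>, OF unimodular f]
    by (intro l2_inner_eq_if_unimodular_multiple_coeff[where \<mu>=\<mu>, OF unimodular f f])
  then show "\<exists>C. \<forall>f. L2 f \<longrightarrow> l2_norm (multiplier_op \<mu> f) \<le> C * l2_norm f"
    by (intro exI[of _ 1]) simp
qed

lemma multiplier_op_e:
  assumes unimodular: "\<And>n. cmod (\<mu> n) = 1"
  shows "l2_eq (multiplier_op \<mu> (e n)) (\<lambda>x. \<mu> n * e n x)"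
proof (rule l2_eq_if_fourier_coeff_eq)
  show "L2 (multiplier_op \<mu> (e n))"
    by (rule L2_multiplier_op[where \<mu>=\<mu>, OF unimodular L2_e])
  show "L2 (\<lambda>x. \<mu> n * e n x)"
    by (rule L2_mult[OF L2_e])
  show "fourier_coeff m (multiplier_op \<mu> (e n)) = fourier_coeff m (\<lambda>x. \<mu> n * e n x)" for m
    by (simp add: fourier_coeff_multiplier_op[where \<mu>=\<mu>, OF unimodular L2_e] l2_inner_mult_right l2_inner_e)
qed

lemma diagonal_op_unitary:
  assumes J: "l2_bounded_op J" and eigen: "\<And>n. l2_eq (J (e n)) (\<lambda>x. \<mu> n * e n x)"
    and unimodular: "\<And>n. cmod (\<mu> n) = 1"
  shows "l2_unitary J"
  unfolding l2_unitary_def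
proof (intro conjI allI impI)
  note JL = l2_bounded_op_L2[OF J]
  show "l2_bounded_op J"
    by (rule J)
  show "l2_inner (J f) (J g) = l2_inner f g" if f: "L2 f" and g: "L2 g" for f g
    by (rule l2_inner_eq_if_unimodular_multiple_coeff[where \<mu>=\<mu>, OF unimodular f g JL[OF f] JL[OF g]])
      (simp_all add: fourier_coeff_diagonal_op[where \<mu>=\<mu>, OF J eigen] f g)
  fix g
  assume g: "L2 g"
  have cnj_unimodular: "cmod (cnj (\<mu> n)) = 1" for n
    by (simp add: unimodular)
  define f where "f = multiplier_op (\<lambda>n. cnj (\<mu> n)) g"
  have f: "L2 f"
    unfolding f_def by (rule L2_multiplier_op[where \<mu>="\<lambda>n. cnj (\<mu> n)", OF cnj_unimodular g])
  have "fourier_coeff m (J f) = fourier_coeff m g" for m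
    using fourier_coeff_diagonal_op[where \<mu>=\<mu>, OF J eigen f, of m] fourier_coeff_multiplier_op[where \<mu>="\<lambda>n. cnj (\<mu> n)", OF cnj_unimodular g, of m]
    unfolding f_def by (simp add: unimodular_mult_cnj unimodular)
  then show "\<exists>f. L2 f \<and> l2_eq (J f) g"
    using f l2_eq_if_fourier_coeff_eq[OF JL[OF f] g] by blast
qed

end


section \<open>The operator J\<close>

interpretation e_fun: l2_complete_orthonormal_seq e_fun
  by unfold_locales (simp_all add: L2_e_fun l2_inner_e_fun e_fun_complete)

lemma strip_S_moebius:
  assumes "s \<in> strip_S"
  shows "- s / (1 + 2 * s) \<in> strip_S"
proof -
  define w where "w = 1 + 2 * s"
  have "0 < Re w"
    using assms by (simp add: strip_S_def w_def)
  then have "w \<noteq> 0"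
    by auto
  then have "- s / (1 + 2 * s) + 1 / 2 = 1 / (2 * w)"
    unfolding w_def by (simp add: divide_simps)
  moreover have "0 < Re (1 / (2 * w))"
    using \<open>0 < Re w\<close> by (simp add: Re_complex_div_gt_0)
  ultimately have "0 < Re (- s / (1 + 2 * s) + 1 / 2)"
    by simp
  then show ?thesis
    by (simp add: strip_S_def)
qed

lemma moebius_coeff_identity:
  fixes s :: complex
  assumes w: "1 + 2 * s \<noteq> 0" and s1: "s + 1 \<noteq> 0"
  shows "1 / (1 + 2 * s) * ((- s / (1 + 2 * s)) ^ m / (- s / (1 + 2 * s) + 1) ^ (m + 1))
    = (-1) ^ m * (s ^ m / (s + 1) ^ (m + 1))"
proof -
  have shift: "- s / (1 + 2 * s) + 1 = (s + 1) / (1 + 2 * s)"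
    using w by (simp add: field_simps)
  have "(- s / (1 + 2 * s)) ^ m = ((-1) * (s / (1 + 2 * s))) ^ m"
    by simp
  also have "\<dots> = (-1) ^ m * (s / (1 + 2 * s)) ^ m"
    by (rule power_mult_distrib)
  finally have numerator: "(- s / (1 + 2 * s)) ^ m = (-1) ^ m * (s ^ m / (1 + 2 * s) ^ m)"
    by (simp add: power_divide)
  have denominator: "((s + 1) / (1 + 2 * s)) ^ (m + 1) = (s + 1) ^ (m + 1) / ((1 + 2 * s) ^ m * (1 + 2 * s))"
    by (simp add: power_divide)
  have cancel: "1 / W * (g * (X / P) / (Q / (P * W))) = g * (X / Q)"
    if "W \<noteq> 0" "P \<noteq> 0" "Q \<noteq> 0" for X P Q W g :: complex
    using that by (simp add: field_simps)
  show ?thesis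
    unfolding shift numerator denominator by (rule cancel) (use w s1 in auto)
qed

lemma parity_op_mon:
  assumes J: "l2_bounded_op J" and eigen: "\<And>n. l2_eq (J (e_fun n)) (\<lambda>x. (-1) ^ n * e_fun n x)"
    and s: "s \<in> strip_S"
  shows "l2_eq (J (mon s)) (\<lambda>x. (1 / (1 + 2 * s)) * mon (- s / (1 + 2 * s)) x)"
proof (rule e_fun.l2_eq_if_fourier_coeff_eq)
  define \<tau> where "\<tau> = - s / (1 + 2 * s)"
  have Re_s: "-1/2 < Re s" and Re_\<tau>: "-1/2 < Re \<tau>"
    using s strip_S_moebius[OF s] by (simp_all add: strip_S_def \<tau>_def)
  have "1 + 2 * s \<noteq> 0"
    using Re_s by (auto simp: complex_eq_iff)
  show "L2 (J (mon s))"
    by (rule l2_bounded_op_L2[OF J L2_mon[OF Re_s]])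
  show "L2 (\<lambda>x. (1 / (1 + 2 * s)) * mon (- s / (1 + 2 * s)) x)"
    by (rule L2_mult[OF L2_mon[OF Re_\<tau>[unfolded \<tau>_def]]])
  fix m
  have "l2_inner (e_fun m) (\<lambda>x. (1 / (1 + 2 * s)) * mon \<tau> x) = 1 / (1 + 2 * s) * (\<tau> ^ m / (\<tau> + 1) ^ (m + 1))"
    unfolding l2_inner_mult_right using Re_\<tau> by (simp add: l2_inner_e_fun_mon)
  also have "\<dots> = (-1) ^ m * (s ^ m / (s + 1) ^ (m + 1))"
    unfolding \<tau>_def
    using \<open>1 + 2 * s \<noteq> 0\<close> complex_add_one_neq_0[of s] Re_s by (intro moebius_coeff_identity) auto
  also have "\<dots> = l2_inner (e_fun m) (J (mon s))"
    using e_fun.fourier_coeff_diagonal_op[where \<mu>="\<lambda>n. (-1) ^ n", OF J eigen L2_mon[OF Re_s]]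
      l2_inner_e_fun_mon[of s m] Re_s by simp
  finally show "l2_inner (e_fun m) (J (mon s)) = l2_inner (e_fun m) (\<lambda>x. (1 / (1 + 2 * s)) * mon (- s / (1 + 2 * s)) x)"
    by (simp add: \<tau>_def)
qed

lemma parity_op_monomial_op:
  assumes J: "l2_bounded_op J" and eigen: "\<And>n. l2_eq (J (e_fun n)) (\<lambda>x. (-1) ^ n * e_fun n x)"
  shows "monomial_op J"
  unfolding monomial_op_def
proof (intro conjI ballI)
  fix s
  assume s: "s \<in> strip_S"
  show "\<exists>\<tau>\<in>strip_S. \<exists>c. l2_eq (J (mon s)) (\<lambda>x. c * mon \<tau> x)"
    using parity_op_mon[OF J eigen s] strip_S_moebius[OF s]
    by (intro bexI[of _ "- s / (1 + 2 * s)"] exI[of _ "1 / (1 + 2 * s)"])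
qed (rule J)

theorem theorem1p19:
  shows "l2_orthonormal_basis e_fun
    \<and> (\<exists>J. l2_bounded_op J \<and> (\<forall>n. l2_eq (J (e_fun n)) (\<lambda>x. (-1) ^ n * e_fun n x)))
    \<and> (\<forall>J. l2_bounded_op J \<and> (\<forall>n. l2_eq (J (e_fun n)) (\<lambda>x. (-1) ^ n * e_fun n x)) \<longrightarrow>
          l2_unitary J \<and> monomial_op J \<and>
          (\<forall>s\<in>strip_S. l2_eq (J (mon s))
               (\<lambda>x. (1 / (1 + 2 * s)) * mon (- s / (1 + 2 * s)) x)))"
proof (intro conjI allI impI)
  have unimodular: "cmod ((-1::complex) ^ n) = 1" for n
    by (simp add: norm_power)
  show "l2_orthonormal_basis e_fun"
    by (rule e_fun.orthonormal_basis)
  show "\<exists>J. l2_bounded_op J \<and> (\<forall>n. l2_eq (J (e_fun n)) (\<lambda>x. (-1) ^ n * e_fun n x))"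
    using e_fun.multiplier_op_bounded[where \<mu>="\<lambda>n. (-1) ^ n", OF unimodular]
      e_fun.multiplier_op_e[where \<mu>="\<lambda>n. (-1) ^ n", OF unimodular]
    by (intro exI[of _ "e_fun.multiplier_op (\<lambda>n. (-1) ^ n)"]) simp
  fix J
  assume "l2_bounded_op J \<and> (\<forall>n. l2_eq (J (e_fun n)) (\<lambda>x. (-1) ^ n * e_fun n x))"
  then have J: "l2_bounded_op J" and eigen: "\<And>n. l2_eq (J (e_fun n)) (\<lambda>x. (-1) ^ n * e_fun n x)"
    by auto
  show "l2_unitary J"
    by (rule e_fun.diagonal_op_unitary[where \<mu>="\<lambda>n. (-1) ^ n", OF J eigen unimodular])
  show "monomial_op J"
    by (rule parity_op_monomial_op[OF J eigen])
  show "\<forall>s\<in>strip_S. l2_eq (J (mon s)) (\<lambda>x. (1 / (1 + 2 * s)) * mon (- s / (1 + 2 * s)) x)"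
    using parity_op_mon[OF J eigen] by blast
qed

end
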